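(* Let $G\subseteq\mathrm{Cl}_n$ and $p$ a probability distribution on $G$ such that $S=\sum_{g\in G}p(g)\omega(g)^\dagger M\omega(g)$ is invertible, and for each $g\in G$ let $\Lambda(g)$ be a quantum channel. Then $S=\frac1d\sum_{a\in\mathbb{F}_2^{2n}}s_a|\sigma_a)(\sigma_a|$ with $s_a\in(0,1]$ (so the $s_a$ are the eigenvalues of $S$), each $\bar\Lambda_a$ is a quantum channel, and the noisy frame operator satisfies $$\tilde S:=\sum_{g\in G}p(g)\omega(g)^\dagger M\omega(g)\Lambda(g)=\frac1d\sum_{a\in\mathbb{F}_2^{2n}}s_a|\sigma_a)(\sigma_a|\bar\Lambda_a.$$ Furthermore, if every $\Lambda(g)$ is a Pauli channel, then $\bar\Lambda_a|\sigma_a)=\bar\lambda_a|\sigma_a)$ with $\bar\lambda_a\in[-1,1]$.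
   Context: $d=2^n$; $(A|B)=\mathrm{Tr}(A^\dagger B)$; $|A)(B|$ is the superoperator $C\mapsto(B|C)A$; $\omega(g)(A)=gAg^\dagger$, $\omega(g)^\dagger(A)=g^\dagger Ag$; $E_x=|x\rangle\langle x|$, $M=\sum_{x\in\mathbb{F}_2^n}|E_x)(E_x|$. Pauli operators $\sigma_a$, $a\in\mathbb{F}_2^{2n}$, with per-qubit convention $\sigma_{00}=\mathbb 1,\sigma_{01}=X,\sigma_{11}=Y,\sigma_{10}=Z$. $Z_z=\bigotimes_iZ^{z_i}$ for $z\in\mathbb{F}_2^n$; for $g\in\mathrm{Cl}_n$, $\Xi_z(g)$ is the Pauli operator $\sigma_b$ with $g^\dagger Z_zg=\pm\sigma_b$. $s_a=\sum_{z\in\mathbb{F}_2^n}\sum_{g\in G:\Xi_z(g)=\sigma_a}p(g)$, $\bar\Lambda_a=s_a^{-1}\sum_z\sum_{g\in G:\Xi_z(g)=\sigma_a}p(g)\Lambda(g)$. A Pauli channel is $\Lambda(\rho)=\sum_bq_b\sigma_b\rho\sigma_b$ with $q$ a probability vector; then $\Lambda(\sigma_a)=\lambda_a\sigma_a$. If $\Lambda(g)$ has eigenvalues $\lambda_a(g)$, $\bar\lambda_a=s_a^{-1}\sum_z\sum_{g\in G:\Xi_z(g)=\sigma_a}p(g)\lambda_a(g)$. *)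

theory Defs
  imports "Jordan_Normal_Form.Matrix" Complex_Main
begin

type_synonym cmat = "complex mat"
type_synonym superop = "cmat \<Rightarrow> cmat"

definition dim :: "nat \<Rightarrow> nat" where "dim n = 2 ^ n"

definition dag :: "cmat \<Rightarrow> cmat" where
  "dag A = mat (dim_col A) (dim_row A) (\<lambda>(i,j). cnj (A $$ (j,i)))"

definition tr :: "cmat \<Rightarrow> complex" where
  "tr A = (\<Sum>i<dim_row A. A $$ (i,i))"

definition hs :: "cmat \<Rightarrow> cmat \<Rightarrow> complex" where
  "hs A B = tr (dag A * B)"

definition msum :: "nat \<Rightarrow> ('a \<Rightarrow> cmat) \<Rightarrow> 'a set \<Rightarrow> cmat" where
  "msum d f X = mat d d (\<lambda>(i,j). \<Sum>x\<in>X. f x $$ (i,j))"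

definition ketbra :: "cmat \<Rightarrow> cmat \<Rightarrow> superop" where
  "ketbra A B = (\<lambda>C. hs B C \<cdot>\<^sub>m A)"

definition omega :: "cmat \<Rightarrow> superop" where
  "omega g = (\<lambda>A. g * A * dag g)"
definition omega_dag :: "cmat \<Rightarrow> superop" where
  "omega_dag g = (\<lambda>A. dag g * A * g)"

text \<open>Single-qubit Paulis with convention sigma_00 = 1, sigma_01 = X, sigma_11 = Y, sigma_10 = Z.\<close>
definition pauli1 :: "bool \<times> bool \<Rightarrow> cmat" where
  "pauli1 ab = (case ab of
      (False, False) \<Rightarrow> mat 2 2 (\<lambda>(i,j). if i = j then 1 else 0)
    | (False, True)  \<Rightarrow> mat 2 2 (\<lambda>(i,j). if i \<noteq> j then 1 else 0)
    | (True, True)   \<Rightarrow> mat 2 2 (\<lambda>(i,j). if i = 0 \<and> j = 1 then - \<i> else if i = 1 \<and> j = 0 then \<i> else 0)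
    | (True, False)  \<Rightarrow> mat 2 2 (\<lambda>(i,j). if i = j then (if i = 0 then 1 else -1) else 0))"

text \<open>a in F_2^{2n} is a list of n bit pairs (one per qubit); computational basis index i
  has bit k (i div 2^k mod 2) as state of qubit k. sigma_a is the tensor product.\<close>
definition pauli :: "(bool \<times> bool) list \<Rightarrow> cmat" where
  "pauli a = mat (2 ^ length a) (2 ^ length a)
     (\<lambda>(i,j). \<Prod>k<length a. pauli1 (a ! k) $$ (i div 2 ^ k mod 2, j div 2 ^ k mod 2))"

definition pauli_idx :: "nat \<Rightarrow> (bool \<times> bool) list set" where
  "pauli_idx n = {a. length a = n}"

definition bitvecs :: "nat \<Rightarrow> bool list set" where
  "bitvecs n = {z. length z = n}"

definition Zz :: "bool list \<Rightarrow> cmat" where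
  "Zz z = pauli (map (\<lambda>b. (b, False)) z)"

definition Ex :: "nat \<Rightarrow> nat \<Rightarrow> cmat" where
  "Ex n x = mat (dim n) (dim n) (\<lambda>(i,j). if i = x \<and> j = x then 1 else 0)"

definition Mop :: "nat \<Rightarrow> superop" where
  "Mop n = (\<lambda>C. msum (dim n) (\<lambda>x. ketbra (Ex n x) (Ex n x) C) {..<dim n})"

definition unitary_mat :: "nat \<Rightarrow> cmat \<Rightarrow> bool" where
  "unitary_mat d U \<longleftrightarrow> U \<in> carrier_mat d d \<and> dag U * U = 1\<^sub>m d \<and> U * dag U = 1\<^sub>m d"

definition Clifford :: "nat \<Rightarrow> cmat set" where
  "Clifford n = {U. unitary_mat (dim n) U \<and>
     (\<forall>a\<in>pauli_idx n. \<exists>b\<in>pauli_idx n. \<exists>s\<in>{1, -1}. U * pauli a * dag U = s \<cdot>\<^sub>m pauli b)}"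

definition Xi :: "nat \<Rightarrow> bool list \<Rightarrow> cmat \<Rightarrow> cmat" where
  "Xi n z g = pauli (THE b. b \<in> pauli_idx n \<and>
       (dag g * Zz z * g = pauli b \<or> dag g * Zz z * g = - pauli b))"

definition quantum_channel :: "nat \<Rightarrow> superop \<Rightarrow> bool" where
  "quantum_channel d L \<longleftrightarrow> (\<exists>Ks :: cmat list. set Ks \<subseteq> carrier_mat d d \<and>
      msum d (\<lambda>k. dag (Ks ! k) * (Ks ! k)) {..<length Ks} = 1\<^sub>m d \<and>
      (\<forall>\<rho>\<in>carrier_mat d d. L \<rho> = msum d (\<lambda>k. (Ks ! k) * \<rho> * dag (Ks ! k)) {..<length Ks}))"

definition pauli_channel :: "nat \<Rightarrow> superop \<Rightarrow> bool" where
  "pauli_channel n L \<longleftrightarrow> (\<exists>q :: (bool \<times> bool) list \<Rightarrow> real.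
      (\<forall>b\<in>pauli_idx n. q b \<ge> 0) \<and> (\<Sum>b\<in>pauli_idx n. q b) = 1 \<and>
      (\<forall>\<rho>\<in>carrier_mat (dim n) (dim n).
          L \<rho> = msum (dim n) (\<lambda>b. complex_of_real (q b) \<cdot>\<^sub>m (pauli b * \<rho> * pauli b)) (pauli_idx n)))"

definition pauli_eig :: "superop \<Rightarrow> (bool \<times> bool) list \<Rightarrow> complex" where
  "pauli_eig L a = (THE c. L (pauli a) = c \<cdot>\<^sub>m pauli a)"

definition s_coef :: "nat \<Rightarrow> cmat set \<Rightarrow> (cmat \<Rightarrow> real) \<Rightarrow> (bool \<times> bool) list \<Rightarrow> real" where
  "s_coef n G p a = (\<Sum>z\<in>bitvecs n. \<Sum>g\<in>{g\<in>G. Xi n z g = pauli a}. p g)"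

definition Lbar :: "nat \<Rightarrow> cmat set \<Rightarrow> (cmat \<Rightarrow> real) \<Rightarrow> (cmat \<Rightarrow> superop)
    \<Rightarrow> (bool \<times> bool) list \<Rightarrow> superop" where
  "Lbar n G p L a = (\<lambda>C. complex_of_real (inverse (s_coef n G p a)) \<cdot>\<^sub>m
      msum (dim n) (\<lambda>z. msum (dim n) (\<lambda>g. complex_of_real (p g) \<cdot>\<^sub>m L g C)
                                    {g\<in>G. Xi n z g = pauli a}) (bitvecs n))"

definition lbar :: "nat \<Rightarrow> cmat set \<Rightarrow> (cmat \<Rightarrow> real) \<Rightarrow> (cmat \<Rightarrow> superop)
    \<Rightarrow> (bool \<times> bool) list \<Rightarrow> complex" where
  "lbar n G p L a = complex_of_real (inverse (s_coef n G p a)) *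
      (\<Sum>z\<in>bitvecs n. \<Sum>g\<in>{g\<in>G. Xi n z g = pauli a}. complex_of_real (p g) * pauli_eig (L g) a)"

definition frame_op :: "nat \<Rightarrow> cmat set \<Rightarrow> (cmat \<Rightarrow> real) \<Rightarrow> superop" where
  "frame_op n G p = (\<lambda>C. msum (dim n)
      (\<lambda>g. complex_of_real (p g) \<cdot>\<^sub>m omega_dag g (Mop n (omega g C))) G)"

definition noisy_frame_op :: "nat \<Rightarrow> cmat set \<Rightarrow> (cmat \<Rightarrow> real) \<Rightarrow> (cmat \<Rightarrow> superop) \<Rightarrow> superop" where
  "noisy_frame_op n G p L = (\<lambda>C. msum (dim n)
      (\<lambda>g. complex_of_real (p g) \<cdot>\<^sub>m omega_dag g (Mop n (omega g (L g C)))) G)"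

end

theory Submission
  imports Defs
begin

text \<open>
  The diagonal Pauli strings \<open>Z\<^sub>z\<close> form an orthogonal basis of the diagonal matrices, so the
  dephasing map is \<open>M = d\<^sup>-\<^sup>1 \<Sum>\<^sub>z |Z\<^sub>z)(Z\<^sub>z|\<close>. A Clifford \<open>g\<close> conjugates \<open>Z\<^sub>z\<close> into
  \<open>\<plusminus>\<Xi>\<^sub>z(g)\<close>, and the sign cancels in the rank-one superoperator, so
  \<open>\<omega>(g)\<^sup>\<dagger> M \<omega>(g) = d\<^sup>-\<^sup>1 \<Sum>\<^sub>z |\<Xi>\<^sub>z(g))(\<Xi>\<^sub>z(g)|\<close>. Grouping the pairs \<open>(z, g)\<close> by the
  Pauli string \<open>\<sigma>\<^sub>a = \<Xi>\<^sub>z(g)\<close> gives both decompositions; in the noisy one the channels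
  \<open>\<Lambda>(g)\<close> of a group are averaged with weights \<open>p(g)/s\<^sub>a\<close>, which is \<open>Lbar a\<close>.
  Since \<open>z \<mapsto> \<Xi>\<^sub>z(g)\<close> is injective, \<open>s\<^sub>a \<le> \<Sum>\<^sub>g p(g) = 1\<close>, and since \<open>S \<sigma>\<^sub>a = s\<^sub>a \<sigma>\<^sub>a\<close> with
  \<open>S\<close> invertible, \<open>s\<^sub>a > 0\<close>. So \<open>Lbar a\<close> is a convex combination of channels, hence a
  channel. Pauli channels all have \<open>\<sigma>\<^sub>a\<close> as an eigenvector, with eigenvalues that are convex
  combinations of signs, and so does their average.
\<close>

lemma index_mult_mat_sum:
  assumes "A \<in> carrier_mat d k" "B \<in> carrier_mat k e" "i < d" "j < e"
  shows "(A * B) $$ (i,j) = (\<Sum>l<k. A $$ (i,l) * B $$ (l,j))"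
  using assms by (auto simp: scalar_prod_def lessThan_atLeast0 intro!: sum.cong)

declare index_mult_mat(1)[simp del]

lemma sum_eq_single:
  assumes "finite S" "x \<in> S" "\<And>y. y \<in> S \<Longrightarrow> y \<noteq> x \<Longrightarrow> f y = 0"
  shows "sum f S = f x"
  using assms by (simp add: sum.remove sum.neutral)

lemma smult_smult_mat: "a \<cdot>\<^sub>m (b \<cdot>\<^sub>m A) = (a * b) \<cdot>\<^sub>m (A :: 'a::semigroup_mult mat)"
  by (rule eq_matI) (auto simp: mult.assoc)

lemma one_smult_mat: "1 \<cdot>\<^sub>m A = (A :: 'a::monoid_mult mat)"
  by (rule eq_matI) auto

lemma uminus_eq_smult_mat: "- A = (-1) \<cdot>\<^sub>m (A :: 'a::ring_1 mat)"
  by (rule eq_matI) auto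

lemma sandwich_smult:
  fixes A B E :: cmat
  assumes "A \<in> carrier_mat d d" "B \<in> carrier_mat d d" "E \<in> carrier_mat d d"
  shows "A * (c \<cdot>\<^sub>m B) * E = c \<cdot>\<^sub>m (A * B * E)"
  using assms by (simp add: mult_smult_distrib[of _ d d _ d] mult_smult_assoc_mat[of _ d d _ d])

lemma sandwich_cancel:
  fixes U V X :: cmat
  assumes U: "U \<in> carrier_mat d d" and V: "V \<in> carrier_mat d d" and VU: "V * U = 1\<^sub>m d"
    and X: "X \<in> carrier_mat d d"
  shows "V * (U * X * V) * U = X"
proof -
  have "V * (U * X * V) * U = (V * U) * X * (V * U)"
    using U V X by (simp add: assoc_mult_mat[of _ d d _ d _ d])
  then show ?thesis
    using X by (simp add: VU)
qed

lemma msum_carrier_mat[simp]: "msum d f X \<in> carrier_mat d d"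
  by (simp add: msum_def)

lemma dim_msum[simp]: "dim_row (msum d f X) = d" "dim_col (msum d f X) = d"
  by (simp_all add: msum_def)

lemma index_msum[simp]: "i < d \<Longrightarrow> j < d \<Longrightarrow> msum d f X $$ (i,j) = (\<Sum>x\<in>X. f x $$ (i,j))"
  by (simp add: msum_def)

lemma msum_cong: "(\<And>x. x \<in> X \<Longrightarrow> f x = g x) \<Longrightarrow> msum d f X = msum d g X"
  by (simp add: msum_def)

lemma msum_Sigma:
  assumes "finite I" "\<And>i. i \<in> I \<Longrightarrow> finite (J i)"
  shows "msum d f (Sigma I J) = msum d (\<lambda>i. msum d (\<lambda>j. f (i,j)) (J i)) I"
  by (rule eq_matI) (simp_all add: assms sum.Sigma split_def)

lemma smult_msum:
  assumes "\<And>x. x \<in> X \<Longrightarrow> f x \<in> carrier_mat d d"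
  shows "c \<cdot>\<^sub>m msum d f X = msum d (\<lambda>x. c \<cdot>\<^sub>m f x) X"
proof (rule eq_matI)
  fix i j assume "i < dim_row (msum d (\<lambda>x. c \<cdot>\<^sub>m f x) X)" "j < dim_col (msum d (\<lambda>x. c \<cdot>\<^sub>m f x) X)"
  then have ij: "i < d" "j < d" by auto
  have "(c \<cdot>\<^sub>m f x) $$ (i,j) = c * f x $$ (i,j)" if "x \<in> X" for x
    using assms[OF that] ij by (simp add: carrier_matD)
  then show "(c \<cdot>\<^sub>m msum d f X) $$ (i,j) = msum d (\<lambda>x. c \<cdot>\<^sub>m f x) X $$ (i,j)"
    using ij by (simp add: sum_distrib_left)
qed auto

lemma msum_smult_const:
  assumes "A \<in> carrier_mat d d"
  shows "msum d (\<lambda>x. c x \<cdot>\<^sub>m A) X = (\<Sum>x\<in>X. c x) \<cdot>\<^sub>m A"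
  by (rule eq_matI) (use assms in \<open>auto simp: sum_distrib_right\<close>)

lemma mult_msum_distrib:
  assumes "A \<in> carrier_mat d d" "\<And>x. x \<in> X \<Longrightarrow> f x \<in> carrier_mat d d"
  shows "A * msum d f X = msum d (\<lambda>x. A * f x) X"
proof (rule eq_matI)
  fix i j assume "i < dim_row (msum d (\<lambda>x. A * f x) X)" "j < dim_col (msum d (\<lambda>x. A * f x) X)"
  then have ij: "i < d" "j < d" by auto
  have "(A * msum d f X) $$ (i,j) = (\<Sum>l<d. A $$ (i,l) * (\<Sum>x\<in>X. f x $$ (l,j)))"
    using ij assms by (simp add: index_mult_mat_sum[of _ d d _ d])
  also have "\<dots> = (\<Sum>x\<in>X. \<Sum>l<d. A $$ (i,l) * f x $$ (l,j))"
    by (simp add: sum_distrib_left) (rule sum.swap)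
  also have "\<dots> = msum d (\<lambda>x. A * f x) X $$ (i,j)"
    using ij assms by (simp add: index_mult_mat_sum[of _ d d _ d])
  finally show "(A * msum d f X) $$ (i,j) = msum d (\<lambda>x. A * f x) X $$ (i,j)" .
qed (use assms in auto)

lemma msum_mult_distrib:
  assumes "A \<in> carrier_mat d d" "\<And>x. x \<in> X \<Longrightarrow> f x \<in> carrier_mat d d"
  shows "msum d f X * A = msum d (\<lambda>x. f x * A) X"
proof (rule eq_matI)
  fix i j assume "i < dim_row (msum d (\<lambda>x. f x * A) X)" "j < dim_col (msum d (\<lambda>x. f x * A) X)"
  then have ij: "i < d" "j < d" by auto
  have "(msum d f X * A) $$ (i,j) = (\<Sum>l<d. (\<Sum>x\<in>X. f x $$ (i,l)) * A $$ (l,j))"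
    using ij assms by (simp add: index_mult_mat_sum[of _ d d _ d])
  also have "\<dots> = (\<Sum>x\<in>X. \<Sum>l<d. f x $$ (i,l) * A $$ (l,j))"
    by (simp add: sum_distrib_right) (rule sum.swap)
  also have "\<dots> = msum d (\<lambda>x. f x * A) X $$ (i,j)"
    using ij assms by (simp add: index_mult_mat_sum[of _ d d _ d])
  finally show "(msum d f X * A) $$ (i,j) = msum d (\<lambda>x. f x * A) X $$ (i,j)" .
qed (use assms in auto)

lemma msum_eq_single:
  assumes "finite X" "a \<in> X" "f a \<in> carrier_mat d d" "\<And>b. b \<in> X \<Longrightarrow> b \<noteq> a \<Longrightarrow> f b = 0\<^sub>m d d"
  shows "msum d f X = f a"
  by (rule eq_matI) (use assms in \<open>auto simp: sum_eq_single[of X a]\<close>)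

lemma msum_Sigma_smult:
  assumes "finite I" "\<And>i. i \<in> I \<Longrightarrow> finite (J i)"
    and "\<And>i j. i \<in> I \<Longrightarrow> j \<in> J i \<Longrightarrow> f i j \<in> carrier_mat d d"
  shows "msum d (\<lambda>(i,j). c i \<cdot>\<^sub>m f i j) (Sigma I J) = msum d (\<lambda>i. c i \<cdot>\<^sub>m msum d (f i) (J i)) I"
  using assms by (simp add: msum_Sigma smult_msum cong: msum_cong)

lemma msum_reindex_bij_betw:
  assumes "bij_betw h S T"
  shows "msum d (\<lambda>x. f (h x)) S = msum d f T"
proof -
  have "(\<Sum>x\<in>S. f (h x) $$ ij) = (\<Sum>x\<in>T. f x $$ ij)" for ij
    using sum.reindex_bij_betw[OF assms, of "\<lambda>x. f x $$ ij"] by simp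
  then show ?thesis by (simp add: msum_def)
qed

lemma dim_dag[simp]: "dim_row (dag A) = dim_col A" "dim_col (dag A) = dim_row A"
  unfolding dag_def by simp_all

lemma dag_carrier_mat[simp]: "A \<in> carrier_mat r c \<Longrightarrow> dag A \<in> carrier_mat c r"
  unfolding carrier_mat_def by simp

lemma index_dag[simp]: "i < dim_col A \<Longrightarrow> j < dim_row A \<Longrightarrow> dag A $$ (i,j) = cnj (A $$ (j,i))"
  by (simp add: dag_def)

lemma dag_smult: "dag (c \<cdot>\<^sub>m A) = cnj c \<cdot>\<^sub>m dag A"
  by (rule eq_matI) auto

lemma tr_smult: "A \<in> carrier_mat d d \<Longrightarrow> tr (c \<cdot>\<^sub>m A) = c * tr A"
  by (simp add: tr_def sum_distrib_left)

lemma tr_mult_smult: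
  "A \<in> carrier_mat d d \<Longrightarrow> B \<in> carrier_mat d d \<Longrightarrow> tr (A * (c \<cdot>\<^sub>m B)) = c * tr (A * B)"
  by (simp add: mult_smult_distrib tr_smult[of _ d])

lemma tr_mult_commute:
  assumes "A \<in> carrier_mat d k" "B \<in> carrier_mat k d"
  shows "tr (A * B) = tr (B * A)"
proof -
  have "tr (A * B) = (\<Sum>i<d. \<Sum>l<k. A $$ (i,l) * B $$ (l,i))"
    using assms by (simp add: tr_def index_mult_mat_sum)
  also have "\<dots> = (\<Sum>l<k. \<Sum>i<d. B $$ (l,i) * A $$ (i,l))"
    by (subst sum.swap) (simp add: mult.commute)
  also have "\<dots> = tr (B * A)"
    using assms by (simp add: tr_def index_mult_mat_sum)
  finally show ?thesis .
qed

lemma tr_mult_sandwich: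
  assumes "Z \<in> carrier_mat d d" "g \<in> carrier_mat d d" "C \<in> carrier_mat d d"
  shows "tr (Z * (g * C * dag g)) = tr ((dag g * Z * g) * C)"
proof -
  have D: "dag g \<in> carrier_mat d d"
    using assms(2) by simp
  have "tr (Z * (g * C * dag g)) = tr ((Z * (g * C)) * dag g)"
    using assoc_mult_mat[OF assms(1) mult_carrier_mat[OF assms(2,3)] D] by simp
  also have "\<dots> = tr (dag g * (Z * (g * C)))"
    using assms D by (intro tr_mult_commute[of _ d d]) auto
  also have "\<dots> = tr ((dag g * Z * g) * C)"
    using assoc_mult_mat[OF mult_carrier_mat[OF D assms(1)] assms(2,3)]
      assoc_mult_mat[OF D assms(1) mult_carrier_mat[OF assms(2,3)]] by simp
  finally show ?thesis .
qed

lemma hs_eq_sum: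
  assumes "A \<in> carrier_mat d e" "B \<in> carrier_mat d e"
  shows "hs A B = (\<Sum>i<e. \<Sum>l<d. cnj (A $$ (l,i)) * B $$ (l,i))"
  using assms by (simp add: hs_def tr_def index_mult_mat_sum[of _ e d _ e])

lemma hs_smult_right:
  assumes "A \<in> carrier_mat d e" "B \<in> carrier_mat d e"
  shows "hs A (c \<cdot>\<^sub>m B) = c * hs A B"
  using assms by (simp add: hs_eq_sum sum_distrib_left algebra_simps)

lemma hs_zero_right: "A \<in> carrier_mat d e \<Longrightarrow> hs A (0\<^sub>m d e) = 0"
  by (simp add: hs_eq_sum)

lemma hs_msum_right:
  assumes "A \<in> carrier_mat d d" "finite X" "\<And>x. x \<in> X \<Longrightarrow> f x \<in> carrier_mat d d"
  shows "hs A (msum d f X) = (\<Sum>x\<in>X. hs A (f x))"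
proof -
  have "hs A (msum d f X) = (\<Sum>i<d. \<Sum>l<d. cnj (A $$ (l,i)) * (\<Sum>x\<in>X. f x $$ (l,i)))"
    using assms by (simp add: hs_eq_sum[of _ d d])
  also have "\<dots> = (\<Sum>x\<in>X. \<Sum>i<d. \<Sum>l<d. cnj (A $$ (l,i)) * f x $$ (l,i))"
    by (simp add: sum_distrib_left sum.swap[where B = X])
  also have "\<dots> = (\<Sum>x\<in>X. hs A (f x))"
    using assms by (intro sum.cong) (simp_all add: hs_eq_sum[of _ d d])
  finally show ?thesis .
qed

lemma ketbra_smult:
  assumes "B \<in> carrier_mat d d" "X \<in> carrier_mat d d"
  shows "ketbra A B (c \<cdot>\<^sub>m X) = c \<cdot>\<^sub>m ketbra A B X"
  using assms by (simp add: ketbra_def hs_smult_right smult_smult_mat)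

subsection \<open>Tensor products of qubit operators\<close>

definition bindigit :: "nat \<Rightarrow> nat \<Rightarrow> nat" where
  "bindigit k q = k div 2 ^ q mod 2"

lemma bindigit_less_2[simp]: "bindigit k q < 2"
  by (simp add: bindigit_def)

lemma bindigit_0: "bindigit k 0 = k mod 2"
  by (simp add: bindigit_def)

lemma bindigit_Suc: "bindigit k (Suc q) = bindigit (k div 2) q"
  by (simp add: bindigit_def div_mult2_eq)

lemma sum_lessThan_double:
  fixes f :: "nat \<Rightarrow> 'a::comm_monoid_add"
  shows "(\<Sum>k<2*N. f k) = (\<Sum>m<N. f (2*m) + f (2*m+1))"
  by (induction N) (simp_all add: add.assoc)

lemma Suc_mult2_mod: "Suc (m * 2) mod 2 = 1" "Suc (m * 2) div 2 = m"
  by presburger+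

lemma sum_prod_bindigit:
  fixes H :: "nat \<Rightarrow> nat \<Rightarrow> 'a::comm_semiring_1"
  shows "(\<Sum>k<2^n. \<Prod>q<n. H q (bindigit k q)) = (\<Prod>q<n. H q 0 + H q 1)"
proof (induction n arbitrary: H)
  case 0
  then show ?case by simp
next
  case (Suc n)
  have "(\<Sum>k<2^Suc n. \<Prod>q<Suc n. H q (bindigit k q))
      = (\<Sum>k<2*2^n. H 0 (k mod 2) * (\<Prod>q<n. H (Suc q) (bindigit (k div 2) q)))"
    by (simp only: power_Suc prod.lessThan_Suc_shift bindigit_0 bindigit_Suc)
  also have "\<dots> = (\<Sum>m<2^n. (H 0 0 + H 0 1) * (\<Prod>q<n. H (Suc q) (bindigit m q)))"
    by (simp add: sum_lessThan_double algebra_simps Suc_mult2_mod)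
  also have "\<dots> = (\<Prod>q<Suc n. H q 0 + H q 1)"
    using Suc.IH[of "\<lambda>q. H (Suc q)"]
    by (simp only: sum_distrib_left[symmetric] prod.lessThan_Suc_shift)
  finally show ?case .
qed

lemma bindigit_inject:
  assumes "i < 2^n" "j < 2^n" "\<forall>q<n. bindigit i q = bindigit j q"
  shows "i = j"
  using assms
proof (induction n arbitrary: i j)
  case 0
  then show ?case by simp
next
  case (Suc n)
  have "i div 2 = j div 2"
    using Suc.prems by (intro Suc.IH) (auto simp: bindigit_Suc[symmetric])
  moreover have "i mod 2 = j mod 2"
    using Suc.prems(3) by (auto simp: bindigit_0[symmetric])
  ultimately show ?case by (metis div_mult_mod_eq)
qed

lemma prod_bindigit_eq_iff:
  fixes c :: "nat \<Rightarrow> 'a::comm_semiring_1"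
  assumes "i < 2^n" "j < 2^n"
  shows "(\<Prod>q<n. if bindigit i q = bindigit j q then c q else 0) = (if i = j then \<Prod>q<n. c q else 0)"
proof (cases "i = j")
  case False
  then obtain q where "q < n" "bindigit i q \<noteq> bindigit j q"
    using bindigit_inject[OF assms] by blast
  then have "(\<Prod>q<n. if bindigit i q = bindigit j q then c q else 0) = 0"
    by (intro prod_zero) (auto intro!: bexI[of _ q])
  then show ?thesis
    using False by simp
qed simp

text \<open>\<open>qtensor n F\<close> is \<open>F (n-1) \<otimes> \<dots> \<otimes> F 0\<close>: qubit \<open>q\<close> is binary digit \<open>q\<close> of a basis index, as in
  \<^const>\<open>pauli\<close>.\<close>

definition qtensor :: "nat \<Rightarrow> (nat \<Rightarrow> cmat) \<Rightarrow> cmat" where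
  "qtensor n F = mat (2^n) (2^n) (\<lambda>(i,j). \<Prod>q<n. F q $$ (bindigit i q, bindigit j q))"

lemma qtensor_carrier_mat[simp]: "qtensor n F \<in> carrier_mat (2^n) (2^n)"
  by (simp add: qtensor_def)

lemma dim_qtensor[simp]: "dim_row (qtensor n F) = 2^n" "dim_col (qtensor n F) = 2^n"
  by (simp_all add: qtensor_def)

lemma index_qtensor:
  "i < 2^n \<Longrightarrow> j < 2^n \<Longrightarrow> qtensor n F $$ (i,j) = (\<Prod>q<n. F q $$ (bindigit i q, bindigit j q))"
  by (simp add: qtensor_def)

lemma sum_lessThan_2: "(\<Sum>l<(2::nat). f l) = f 0 + (f 1 :: 'a::comm_monoid_add)"
  by (simp add: numeral_2_eq_2)

lemma qtensor_mult:
  assumes "\<And>q. q < n \<Longrightarrow> F q \<in> carrier_mat 2 2" "\<And>q. q < n \<Longrightarrow> G q \<in> carrier_mat 2 2"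
  shows "qtensor n F * qtensor n G = qtensor n (\<lambda>q. F q * G q)"
proof (rule eq_matI)
  fix i j assume "i < dim_row (qtensor n (\<lambda>q. F q * G q))" "j < dim_col (qtensor n (\<lambda>q. F q * G q))"
  then have ij: "i < 2^n" "j < 2^n" by auto
  have "(qtensor n F * qtensor n G) $$ (i,j)
     = (\<Sum>k<2^n. \<Prod>q<n. F q $$ (bindigit i q, bindigit k q) * G q $$ (bindigit k q, bindigit j q))"
    using ij by (simp add: index_mult_mat_sum[of _ "2^n" "2^n" _ "2^n"] index_qtensor prod.distrib)
  also have "\<dots> = (\<Prod>q<n. F q $$ (bindigit i q, 0) * G q $$ (0, bindigit j q)
                         + F q $$ (bindigit i q, 1) * G q $$ (1, bindigit j q))"
    by (rule sum_prod_bindigit)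
  also have "\<dots> = (\<Prod>q<n. (F q * G q) $$ (bindigit i q, bindigit j q))"
    using assms by (intro prod.cong refl) (simp add: index_mult_mat_sum[of _ 2 2 _ 2] sum_lessThan_2)
  finally show "(qtensor n F * qtensor n G) $$ (i,j) = qtensor n (\<lambda>q. F q * G q) $$ (i,j)"
    using ij by (simp add: index_qtensor)
qed auto

lemma tr_qtensor:
  assumes "\<And>q. q < n \<Longrightarrow> F q \<in> carrier_mat 2 2"
  shows "tr (qtensor n F) = (\<Prod>q<n. tr (F q))"
proof -
  have "tr (qtensor n F) = (\<Sum>k<2^n. \<Prod>q<n. F q $$ (bindigit k q, bindigit k q))"
    by (simp add: tr_def index_qtensor)
  also have "\<dots> = (\<Prod>q<n. F q $$ (0,0) + F q $$ (1,1))"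
    by (rule sum_prod_bindigit)
  also have "\<dots> = (\<Prod>q<n. tr (F q))"
  proof (intro prod.cong refl)
    fix q assume "q \<in> {..<n}"
    then have "F q \<in> carrier_mat 2 2" using assms by simp
    then show "F q $$ (0,0) + F q $$ (1,1) = tr (F q)" by (simp add: tr_def sum_lessThan_2)
  qed
  finally show ?thesis .
qed

lemma dag_qtensor:
  assumes "\<And>q. q < n \<Longrightarrow> F q \<in> carrier_mat 2 2"
  shows "dag (qtensor n F) = qtensor n (\<lambda>q. dag (F q))"
proof (rule eq_matI)
  fix i j assume "i < dim_row (qtensor n (\<lambda>q. dag (F q)))" "j < dim_col (qtensor n (\<lambda>q. dag (F q)))"
  then have ij: "i < 2^n" "j < 2^n" by auto
  have "dag (F q) $$ (bindigit i q, bindigit j q) = cnj (F q $$ (bindigit j q, bindigit i q))" if "q < n" for q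
    using assms[OF that] by simp
  then show "dag (qtensor n F) $$ (i,j) = qtensor n (\<lambda>q. dag (F q)) $$ (i,j)"
    using ij by (simp add: index_qtensor cnj_prod)
qed auto

lemma qtensor_smult:
  assumes "\<And>q. q < n \<Longrightarrow> F q \<in> carrier_mat 2 2"
  shows "qtensor n (\<lambda>q. c q \<cdot>\<^sub>m F q) = (\<Prod>q<n. c q) \<cdot>\<^sub>m qtensor n F"
proof (rule eq_matI)
  fix i j assume "i < dim_row ((\<Prod>q<n. c q) \<cdot>\<^sub>m qtensor n F)" "j < dim_col ((\<Prod>q<n. c q) \<cdot>\<^sub>m qtensor n F)"
  then have ij: "i < 2^n" "j < 2^n" by auto
  have "(c q \<cdot>\<^sub>m F q) $$ (bindigit i q, bindigit j q) = c q * F q $$ (bindigit i q, bindigit j q)"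
    if "q < n" for q
    using assms[OF that] by simp
  then show "qtensor n (\<lambda>q. c q \<cdot>\<^sub>m F q) $$ (i,j) = ((\<Prod>q<n. c q) \<cdot>\<^sub>m qtensor n F) $$ (i,j)"
    using ij by (simp add: index_qtensor prod.distrib)
qed auto

lemma qtensor_one: "qtensor n (\<lambda>q. 1\<^sub>m 2) = 1\<^sub>m (2^n)"
proof (rule eq_matI)
  fix i j assume "i < dim_row (1\<^sub>m (2^n) :: cmat)" "j < dim_col (1\<^sub>m (2^n) :: cmat)"
  then have ij: "i < 2^n" "j < 2^n" by auto
  have "qtensor n (\<lambda>q. 1\<^sub>m 2) $$ (i,j) = (\<Prod>q<n. if bindigit i q = bindigit j q then 1 else 0)"
    using ij by (simp add: index_qtensor)
  also have "\<dots> = (if i = j then 1 else 0)"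
    by (subst prod_bindigit_eq_iff[OF ij]) simp
  finally show "qtensor n (\<lambda>q. 1\<^sub>m 2) $$ (i, j) = 1\<^sub>m (2 ^ n) $$ (i, j)"
    using ij by simp
qed auto

subsection \<open>Pauli matrices\<close>

lemma mat2_eqI:
  assumes "A \<in> carrier_mat 2 2" "B \<in> carrier_mat 2 2"
    "A $$ (0,0) = B $$ (0,0)" "A $$ (0,1) = B $$ (0,1)" "A $$ (1,0) = B $$ (1,0)" "A $$ (1,1) = B $$ (1,1)"
  shows "A = B"
proof (rule eq_matI)
  fix i j assume "i < dim_row B" "j < dim_col B"
  then have "i = 0 \<or> i = 1" "j = 0 \<or> j = 1" using assms(2) by auto
  then show "A $$ (i, j) = B $$ (i, j)" using assms by auto
qed (use assms in auto)

lemma index_mult_mat_2: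
  "A \<in> carrier_mat 2 2 \<Longrightarrow> B \<in> carrier_mat 2 2 \<Longrightarrow> i < 2 \<Longrightarrow> j < 2 \<Longrightarrow>
    (A * B) $$ (i,j) = A $$ (i,0) * B $$ (0,j) + A $$ (i,1) * B $$ (1,j)"
  by (simp add: index_mult_mat_sum[of _ 2 2 _ 2] sum_lessThan_2)

lemma bool_pair_cases:
  obtains "ab = (False,False)" | "ab = (False,True)" | "ab = (True,True)" | "ab = (True,False)"
  by (cases ab) auto

lemma pauli1_carrier_mat[simp]: "pauli1 ab \<in> carrier_mat 2 2"
  by (simp add: pauli1_def split: prod.split bool.split)

lemma dim_pauli1[simp]: "dim_row (pauli1 ab) = 2" "dim_col (pauli1 ab) = 2"
  using pauli1_carrier_mat[of ab] by (auto simp del: pauli1_carrier_mat)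

lemma pauli1_mult_carrier_mat[simp]:
  "pauli1 a * pauli1 b \<in> carrier_mat 2 2" "pauli1 c * pauli1 a * pauli1 b \<in> carrier_mat 2 2"
  by (auto intro!: mult_carrier_mat)

lemma dag_pauli1: "dag (pauli1 ab) = pauli1 ab"
  by (cases ab rule: bool_pair_cases) (rule mat2_eqI; simp add: pauli1_def)+

lemma pauli1_mult_self: "pauli1 ab * pauli1 ab = 1\<^sub>m 2"
  by (cases ab rule: bool_pair_cases) (rule mat2_eqI; simp add: index_mult_mat_2; simp add: pauli1_def)+

lemma tr_pauli1_mult: "tr (pauli1 a * pauli1 b) = (if a = b then 2 else 0)"
  by (cases a rule: bool_pair_cases; cases b rule: bool_pair_cases;
      simp add: tr_def sum_lessThan_2 index_mult_mat_2; simp add: pauli1_def)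

definition pauli1_sign :: "bool \<times> bool \<Rightarrow> bool \<times> bool \<Rightarrow> real" where
  "pauli1_sign a b = (if a = (False,False) \<or> b = (False,False) \<or> a = b then 1 else -1)"

lemma pauli1_conj_pauli1:
  "pauli1 b * pauli1 a * pauli1 b = complex_of_real (pauli1_sign a b) \<cdot>\<^sub>m pauli1 a"
  by (cases a rule: bool_pair_cases; cases b rule: bool_pair_cases; simp only:;
      rule mat2_eqI; simp add: index_mult_mat_2; simp add: pauli1_def pauli1_sign_def)

lemma pauli_eq_qtensor: "pauli a = qtensor (length a) (\<lambda>q. pauli1 (a ! q))"
  by (simp add: pauli_def qtensor_def bindigit_def)

lemma pauli_carrier_mat[simp]: "pauli a \<in> carrier_mat (2 ^ length a) (2 ^ length a)"
  by (simp add: pauli_eq_qtensor)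

lemma dim_pauli[simp]: "dim_row (pauli a) = 2 ^ length a" "dim_col (pauli a) = 2 ^ length a"
  by (simp_all add: pauli_eq_qtensor)

lemma dag_pauli[simp]: "dag (pauli a) = pauli a"
  by (simp add: pauli_eq_qtensor dag_qtensor dag_pauli1)

lemma pauli_mult_self: "pauli a * pauli a = 1\<^sub>m (2 ^ length a)"
  by (simp add: pauli_eq_qtensor qtensor_mult pauli1_mult_self qtensor_one)

lemma tr_pauli_mult:
  assumes "length a = length b"
  shows "tr (pauli a * pauli b) = (if a = b then 2 ^ length a else 0)"
proof -
  have "tr (pauli a * pauli b) = (\<Prod>q<length a. if a ! q = b ! q then 2 else 0)"
    using assms by (simp add: pauli_eq_qtensor qtensor_mult tr_qtensor tr_pauli1_mult)
  also have "\<dots> = (if a = b then 2 ^ length a else 0)"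
    using assms nth_equalityI[of a b] by (auto simp: prod_zero_iff)
  finally show ?thesis .
qed

lemma hs_pauli:
  "length a = length b \<Longrightarrow> hs (pauli a) (pauli b) = (if a = b then 2 ^ length a else 0)"
  by (simp add: hs_def tr_pauli_mult)

lemma smult_pauli_eqD:
  assumes "length a = length b" and eq: "c \<cdot>\<^sub>m pauli a = c' \<cdot>\<^sub>m pauli b"
  shows "c = (if a = b then c' else 0)"
proof -
  have P: "pauli a \<in> carrier_mat (2 ^ length a) (2 ^ length a)"
          "pauli b \<in> carrier_mat (2 ^ length a) (2 ^ length a)"
    using pauli_carrier_mat[of a] pauli_carrier_mat[of b] unfolding assms(1) by simp_all
  have "c * 2 ^ length a = tr (pauli a * (c \<cdot>\<^sub>m pauli a))"
    using tr_mult_smult[OF P(1) P(1)] by (simp add: tr_pauli_mult)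
  also have "\<dots> = tr (pauli a * (c' \<cdot>\<^sub>m pauli b))"
    using eq by simp
  also have "\<dots> = c' * (if a = b then 2 ^ length a else 0)"
    using tr_mult_smult[OF P] by (simp add: tr_pauli_mult assms(1))
  finally show ?thesis by (auto split: if_splits)
qed

lemma pauli_neq_zero: "pauli a \<noteq> 0\<^sub>m (2 ^ length a) (2 ^ length a)"
proof
  assume "pauli a = 0\<^sub>m (2 ^ length a) (2 ^ length a)"
  then have "(1\<^sub>m (2 ^ length a) :: cmat) = 0\<^sub>m (2 ^ length a) (2 ^ length a)"
    using pauli_mult_self[of a] by simp
  then have "(1\<^sub>m (2 ^ length a) :: cmat) $$ (0,0) = 0\<^sub>m (2 ^ length a) (2 ^ length a) $$ (0,0)"
    by simp
  then show False by simp
qed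

definition pauli_sign :: "(bool \<times> bool) list \<Rightarrow> (bool \<times> bool) list \<Rightarrow> real" where
  "pauli_sign a b = (\<Prod>q<length a. pauli1_sign (a ! q) (b ! q))"

lemma abs_pauli_sign: "\<bar>pauli_sign a b\<bar> = 1"
  unfolding pauli_sign_def abs_prod by (rule prod.neutral) (simp add: pauli1_sign_def)

lemma pauli_conj_pauli:
  assumes "length a = length b"
  shows "pauli b * pauli a * pauli b = complex_of_real (pauli_sign a b) \<cdot>\<^sub>m pauli a"
  using assms
  by (simp add: pauli_eq_qtensor qtensor_mult pauli1_conj_pauli1 qtensor_smult pauli_sign_def of_real_prod)

lemma finite_pauli_idx[simp]: "finite (pauli_idx n)"
  unfolding pauli_idx_def using finite_lists_length_eq[of "UNIV :: (bool \<times> bool) set" n] by simp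

lemma pauli_idx_carrier_mat: "a \<in> pauli_idx n \<Longrightarrow> pauli a \<in> carrier_mat (2^n) (2^n)"
  using pauli_carrier_mat[of a] by (simp add: pauli_idx_def)

lemma pauli_idx_inj: "a \<in> pauli_idx n \<Longrightarrow> b \<in> pauli_idx n \<Longrightarrow> pauli a = pauli b \<Longrightarrow> a = b"
  using smult_pauli_eqD[of a b 1 1] by (simp add: pauli_idx_def split: if_splits)

lemma signed_pauli_inj:
  assumes "length a = length b" "s \<in> {1,-1}" "s \<cdot>\<^sub>m pauli a = s' \<cdot>\<^sub>m pauli b"
  shows "a = b"
  using smult_pauli_eqD[OF assms(1,3)] assms(2) by (auto split: if_splits)

lemma finite_bitvecs[simp]: "finite (bitvecs n)"
  unfolding bitvecs_def using finite_lists_length_eq[of "UNIV :: bool set" n] by simp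

lemma bitvecs_Suc: "bitvecs (Suc n) = (\<lambda>(b,z). b # z) ` (UNIV \<times> bitvecs n)"
  unfolding bitvecs_def by (auto simp: length_Suc_conv image_iff)

lemma sum_prod_bitvecs:
  fixes H :: "nat \<Rightarrow> bool \<Rightarrow> 'a::comm_semiring_1"
  shows "(\<Sum>z\<in>bitvecs n. \<Prod>q<n. H q (z ! q)) = (\<Prod>q<n. H q False + H q True)"
proof (induction n arbitrary: H)
  case 0
  have "bitvecs 0 = {[]}" by (auto simp: bitvecs_def)
  then show ?case by simp
next
  case (Suc n)
  have inj: "inj_on (\<lambda>(b,z). b # z) (UNIV \<times> bitvecs n)" by (auto simp: inj_on_def)
  have "(\<Sum>z\<in>bitvecs (Suc n). \<Prod>q<Suc n. H q (z ! q))
      = (\<Sum>(b,z)\<in>UNIV \<times> bitvecs n. H 0 b * (\<Prod>q<n. H (Suc q) (z ! q)))"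
    unfolding bitvecs_Suc sum.reindex[OF inj]
    by (simp del: prod.lessThan_Suc add: prod.lessThan_Suc_shift case_prod_unfold)
  also have "\<dots> = (\<Sum>b\<in>UNIV. H 0 b) * (\<Sum>z\<in>bitvecs n. \<Prod>q<n. H (Suc q) (z ! q))"
    by (simp add: sum.cartesian_product[symmetric] sum_product)
  also have "\<dots> = (\<Prod>q<Suc n. H q False + H q True)"
    using Suc.IH[of "\<lambda>q. H (Suc q)"] by (simp add: UNIV_bool prod.lessThan_Suc_shift del: prod.lessThan_Suc)
  finally show ?case .
qed

subsection \<open>The dephasing superoperator\<close>

definition zsign :: "bool list \<Rightarrow> nat \<Rightarrow> complex" where
  "zsign z i = (\<Prod>q<length z. if z ! q \<and> bindigit i q = 1 then -1 else 1)"

lemma cnj_zsign[simp]: "cnj (zsign z k) = zsign z k"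
  by (simp add: zsign_def cnj_prod if_distrib cong: if_cong)

lemma Zz_carrier_mat[simp]: "Zz z \<in> carrier_mat (2 ^ length z) (2 ^ length z)"
  using pauli_carrier_mat[of "map (\<lambda>b. (b, False)) z"] by (simp add: Zz_def)

lemma dim_Zz[simp]: "dim_row (Zz z) = 2 ^ length z" "dim_col (Zz z) = 2 ^ length z"
  using Zz_carrier_mat[of z] by (auto simp del: Zz_carrier_mat)

lemma dag_Zz[simp]: "dag (Zz z) = Zz z"
  by (simp add: Zz_def)

lemma index_Zz:
  assumes "i < 2 ^ length z" "j < 2 ^ length z"
  shows "Zz z $$ (i,j) = (if i = j then zsign z i else 0)"
proof -
  have "pauli1 (z ! q, False) $$ (bindigit i q, bindigit j q)
      = (if bindigit i q = bindigit j q then (if z ! q \<and> bindigit i q = 1 then -1 else 1) else 0)" for q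
    using bindigit_less_2[of i q] bindigit_less_2[of j q]
    by (cases "z ! q") (auto simp: pauli1_def less_2_cases_iff)
  then have "Zz z $$ (i,j) = (\<Prod>q<length z. if bindigit i q = bindigit j q
                                then (if z ! q \<and> bindigit i q = 1 then -1 else 1) else 0)"
    using assms by (simp add: Zz_def pauli_eq_qtensor index_qtensor)
  then show ?thesis
    using assms by (simp add: prod_bindigit_eq_iff zsign_def)
qed

lemma hs_Zz:
  assumes "length z = n" "X \<in> carrier_mat (2^n) (2^n)"
  shows "hs (Zz z) X = (\<Sum>k<2^n. zsign z k * X $$ (k,k))"
proof -
  have "hs (Zz z) X = (\<Sum>i<2^n. \<Sum>l<2^n. cnj (Zz z $$ (l,i)) * X $$ (l,i))"
    using assms Zz_carrier_mat[of z] by (simp add: hs_eq_sum)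
  also have "\<dots> = (\<Sum>i<2^n. \<Sum>l<2^n. if l = i then zsign z i * X $$ (i,i) else 0)"
    using assms by (intro sum.cong refl) (auto simp: index_Zz)
  finally show ?thesis by simp
qed

lemma sum_zsign_mult:
  assumes "k < 2 ^ n" "i < 2 ^ n"
  shows "(\<Sum>z\<in>bitvecs n. zsign z k * zsign z i) = (if k = i then 2 ^ n else 0)"
proof -
  have "(\<Sum>z\<in>bitvecs n. zsign z k * zsign z i)
      = (\<Sum>z\<in>bitvecs n. \<Prod>q<n. (if z ! q \<and> bindigit k q = 1 then -1 else 1)
                              * (if z ! q \<and> bindigit i q = 1 then -1 else (1::complex)))"
    by (intro sum.cong refl) (simp add: zsign_def bitvecs_def prod.distrib)
  also have "\<dots> = (\<Prod>q<n. if bindigit k q = bindigit i q then 2 else 0)"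
  proof -
    have "1 + (if bindigit k q = 1 then -1 else 1) * (if bindigit i q = 1 then -1 else 1)
        = (if bindigit k q = bindigit i q then 2 else (0::complex))" for q
      using bindigit_less_2[of k q] bindigit_less_2[of i q] by (auto simp: less_2_cases_iff)
    then show ?thesis
      by (subst sum_prod_bitvecs) simp
  qed
  also have "\<dots> = (if k = i then 2 ^ n else 0)"
    by (subst prod_bindigit_eq_iff[OF assms]) simp
  finally show ?thesis .
qed

lemma Ex_carrier_mat[simp]: "Ex n x \<in> carrier_mat (2^n) (2^n)"
  by (simp add: Ex_def dim_def)

lemma dim_Ex[simp]: "dim_row (Ex n x) = 2^n" "dim_col (Ex n x) = 2^n"
  by (simp_all add: Ex_def dim_def)

lemma index_Ex: "i < 2^n \<Longrightarrow> j < 2^n \<Longrightarrow> Ex n x $$ (i,j) = (if i = x \<and> j = x then 1 else 0)"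
  by (simp add: Ex_def dim_def)

lemma hs_Ex:
  assumes "x < 2^n" "X \<in> carrier_mat (2^n) (2^n)"
  shows "hs (Ex n x) X = X $$ (x,x)"
proof -
  have "hs (Ex n x) X = (\<Sum>i<2^n. \<Sum>l<2^n. if i = x then (if l = x then X $$ (l,i) else 0) else 0)"
    using assms by (auto simp: hs_eq_sum[of _ "2^n" "2^n"] index_Ex intro!: sum.cong)
  also have "\<dots> = (\<Sum>i<2^n. if i = x then X $$ (x,i) else 0)"
    using assms by (intro sum.cong refl) auto
  finally show ?thesis
    using assms by simp
qed

lemma index_Mop:
  assumes "X \<in> carrier_mat (2^n) (2^n)" "i < 2^n" "j < 2^n"
  shows "Mop n X $$ (i,j) = (if i = j then X $$ (i,i) else 0)"
proof -
  have "Mop n X $$ (i,j) = (\<Sum>x<2^n. X $$ (x,x) * (if i = x \<and> j = x then 1 else 0))"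
    using assms by (simp add: Mop_def ketbra_def dim_def hs_Ex index_Ex)
  also have "\<dots> = (\<Sum>x<2^n. if x = i then (if i = j then X $$ (i,i) else 0) else 0)"
    by (intro sum.cong refl) auto
  finally show ?thesis
    using assms by simp
qed

lemma Mop_eq_msum_Zz:
  assumes "X \<in> carrier_mat (2^n) (2^n)"
  shows "Mop n X = msum (2^n) (\<lambda>z. (hs (Zz z) X / 2^n) \<cdot>\<^sub>m Zz z) (bitvecs n)"
proof (rule eq_matI)
  fix i j assume "i < dim_row (msum (2^n) (\<lambda>z. (hs (Zz z) X / 2^n) \<cdot>\<^sub>m Zz z) (bitvecs n))"
     "j < dim_col (msum (2^n) (\<lambda>z. (hs (Zz z) X / 2^n) \<cdot>\<^sub>m Zz z) (bitvecs n))"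
  then have ij: "i < 2^n" "j < 2^n" by auto
  have "msum (2^n) (\<lambda>z. (hs (Zz z) X / 2^n) \<cdot>\<^sub>m Zz z) (bitvecs n) $$ (i,j)
      = (\<Sum>z\<in>bitvecs n. (hs (Zz z) X / 2^n) * (if i = j then zsign z i else 0))"
    using ij by (auto simp: bitvecs_def index_Zz intro!: sum.cong)
  also have "\<dots> = (if i = j then (\<Sum>z\<in>bitvecs n. \<Sum>k<2^n. X $$ (k,k) * (zsign z k * zsign z i)) / 2^n else 0)"
    using assms by (auto simp: hs_Zz bitvecs_def sum_divide_distrib sum_distrib_left sum_distrib_right mult_ac
                         intro!: sum.cong)
  also have "\<dots> = (if i = j then (\<Sum>k<2^n. X $$ (k,k) * (\<Sum>z\<in>bitvecs n. zsign z k * zsign z i)) / 2^n else 0)"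
    by (simp add: sum_distrib_left sum.swap[of _ "bitvecs n"])
  also have "\<dots> = Mop n X $$ (i,j)"
    using ij assms by (simp add: sum_zsign_mult index_Mop if_distrib cong: if_cong)
  finally show "Mop n X $$ (i,j) = msum (2^n) (\<lambda>z. (hs (Zz z) X / 2^n) \<cdot>\<^sub>m Zz z) (bitvecs n) $$ (i,j)"
    by simp
qed (auto simp: Mop_def dim_def)

subsection \<open>Clifford conjugation of Pauli strings\<close>

definition signed_paulis :: "nat \<Rightarrow> cmat set" where
  "signed_paulis n = {s \<cdot>\<^sub>m pauli a | s a. s \<in> {1,-1} \<and> a \<in> pauli_idx n}"

lemma finite_signed_paulis: "finite (signed_paulis n)"
proof -
  have "signed_paulis n = (\<lambda>(s,a). s \<cdot>\<^sub>m pauli a) ` ({1,-1} \<times> pauli_idx n)"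
    by (auto simp: signed_paulis_def image_iff)
  then show ?thesis by simp
qed

lemma signed_paulis_carrier_mat: "x \<in> signed_paulis n \<Longrightarrow> x \<in> carrier_mat (2^n) (2^n)"
  by (auto simp: signed_paulis_def pauli_idx_def)

lemma Zz_in_signed_paulis: "z \<in> bitvecs n \<Longrightarrow> Zz z \<in> signed_paulis n"
  unfolding signed_paulis_def Zz_def
  by (auto simp: bitvecs_def pauli_idx_def one_smult_mat intro!: exI[of _ 1])

lemma CliffordD:
  assumes "g \<in> Clifford n"
  shows "g \<in> carrier_mat (2^n) (2^n)" "dag g * g = 1\<^sub>m (2^n)" "g * dag g = 1\<^sub>m (2^n)"
    "\<And>a. a \<in> pauli_idx n \<Longrightarrow> \<exists>b\<in>pauli_idx n. \<exists>s\<in>{1,-1}. g * pauli a * dag g = s \<cdot>\<^sub>m pauli b"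
  using assms by (auto simp: Clifford_def unitary_mat_def dim_def)

lemma Clifford_conj_signed_paulis:
  assumes "g \<in> Clifford n" "x \<in> signed_paulis n"
  shows "g * x * dag g \<in> signed_paulis n"
proof -
  obtain s a where x: "x = s \<cdot>\<^sub>m pauli a" "s \<in> {1,-1}" "a \<in> pauli_idx n"
    using assms(2) by (auto simp: signed_paulis_def)
  obtain b s' where b: "b \<in> pauli_idx n" "s' \<in> {1,-1}" "g * pauli a * dag g = s' \<cdot>\<^sub>m pauli b"
    using CliffordD(4)[OF assms(1) x(3)] by blast
  have "g * x * dag g = (s * s') \<cdot>\<^sub>m pauli b"
    using x b CliffordD(1)[OF assms(1)] pauli_idx_carrier_mat[OF x(3)]
    by (simp add: sandwich_smult[of _ "2^n"] smult_smult_mat)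
  moreover have "s * s' \<in> {1,-1}"
    using x b by auto
  ultimately show ?thesis
    using b by (auto simp: signed_paulis_def)
qed

text \<open>Conjugation by \<open>g\<close> maps the finite set of signed Pauli strings injectively into itself,
  hence onto itself; so \<open>Z\<^sub>z\<close> has a signed Pauli string as preimage.\<close>

lemma Clifford_adjoint_conj_Zz:
  assumes "g \<in> Clifford n" "z \<in> bitvecs n"
  shows "dag g * Zz z * g \<in> signed_paulis n"
proof -
  note g = CliffordD[OF assms(1)]
  let ?f = "\<lambda>x. g * x * dag g"
  have cancel: "dag g * ?f x * g = x" if "x \<in> signed_paulis n" for x
    using sandwich_cancel[OF g(1) dag_carrier_mat[OF g(1)] g(2) signed_paulis_carrier_mat[OF that]] .
  have "inj_on ?f (signed_paulis n)"
    by (rule inj_on_inverseI[where g = "\<lambda>y. dag g * y * g"]) (rule cancel)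
  then have "?f ` signed_paulis n = signed_paulis n"
    using finite_signed_paulis Clifford_conj_signed_paulis[OF assms(1)] by (intro endo_inj_surj) auto
  then obtain y where "y \<in> signed_paulis n" "Zz z = ?f y"
    using Zz_in_signed_paulis[OF assms(2)] by blast
  then show ?thesis
    using cancel by simp
qed

lemma Xi_eqI:
  assumes "s \<in> {1,-1}" "b \<in> pauli_idx n" "dag g * Zz z * g = s \<cdot>\<^sub>m pauli b"
  shows "Xi n z g = pauli b"
proof -
  have "(THE b. b \<in> pauli_idx n \<and> (dag g * Zz z * g = pauli b \<or> dag g * Zz z * g = - pauli b)) = b"
  proof (rule the_equality)
    show "b \<in> pauli_idx n \<and> (dag g * Zz z * g = pauli b \<or> dag g * Zz z * g = - pauli b)"
      using assms by (auto simp: one_smult_mat)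
  next
    fix b' assume b': "b' \<in> pauli_idx n \<and> (dag g * Zz z * g = pauli b' \<or> dag g * Zz z * g = - pauli b')"
    then obtain s' where "s' \<in> {1,-1}" "dag g * Zz z * g = s' \<cdot>\<^sub>m pauli b'"
      by (metis insertCI one_smult_mat uminus_eq_smult_mat)
    then show "b' = b"
      using signed_pauli_inj[of b' b s' s] assms b' by (auto simp: pauli_idx_def)
  qed
  then show ?thesis by (simp add: Xi_def)
qed

lemma Clifford_conj_Zz_Xi:
  assumes "g \<in> Clifford n" "z \<in> bitvecs n"
  obtains s b where "s \<in> {1,-1}" "b \<in> pauli_idx n" "Xi n z g = pauli b" "dag g * Zz z * g = s \<cdot>\<^sub>m pauli b"
  using Clifford_adjoint_conj_Zz[OF assms] Xi_eqI by (auto simp: signed_paulis_def)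

lemma Xi_carrier_mat:
  assumes "g \<in> Clifford n" "z \<in> bitvecs n"
  shows "Xi n z g \<in> carrier_mat (2^n) (2^n)"
  using Clifford_conj_Zz_Xi[OF assms] pauli_idx_carrier_mat by metis

lemma Xi_inj:
  assumes g: "g \<in> Clifford n" and z: "z \<in> bitvecs n" and z': "z' \<in> bitvecs n"
    and eq: "Xi n z g = Xi n z' g"
  shows "z = z'"
proof -
  note gc = CliffordD[OF g]
  have D: "dag g \<in> carrier_mat (2^n) (2^n)" using gc(1) by simp
  obtain s b where sb: "s \<in> {1,-1}" "b \<in> pauli_idx n" "Xi n z g = pauli b" "dag g * Zz z * g = s \<cdot>\<^sub>m pauli b"
    using Clifford_conj_Zz_Xi[OF g z] .
  obtain s' b' where sb': "s' \<in> {1,-1}" "b' \<in> pauli_idx n" "Xi n z' g = pauli b'" "dag g * Zz z' * g = s' \<cdot>\<^sub>m pauli b'"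
    using Clifford_conj_Zz_Xi[OF g z'] .
  have "b' = b" using eq sb sb' pauli_idx_inj by metis
  have P: "pauli b \<in> carrier_mat (2^n) (2^n)" using pauli_idx_carrier_mat[OF sb(2)] .
  have Zc: "Zz y \<in> carrier_mat (2^n) (2^n)" if "y \<in> bitvecs n" for y
    using that Zz_carrier_mat[of y] by (simp add: bitvecs_def)
  have "Zz y = g * (dag g * Zz y * g) * dag g" if "y \<in> bitvecs n" for y
    using sandwich_cancel[OF D gc(1) gc(3) Zc[OF that]] by simp
  then have "Zz z = s \<cdot>\<^sub>m (g * pauli b * dag g)" "Zz z' = s' \<cdot>\<^sub>m (g * pauli b * dag g)"
    using z z' sb(4) sb'(4) \<open>b' = b\<close> sandwich_smult[OF gc(1) P D] by metis+
  then have "s' \<cdot>\<^sub>m pauli (map (\<lambda>b. (b, False)) z) = s \<cdot>\<^sub>m pauli (map (\<lambda>b. (b, False)) z')"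
    unfolding Zz_def[symmetric] by (simp add: smult_smult_mat mult.commute)
  then have "map (\<lambda>b. (b, False)) z = map (\<lambda>b. (b, False)) z'"
    using signed_pauli_inj sb sb' z z' by (auto simp: bitvecs_def)
  then show ?thesis by (simp add: inj_map_eq_map inj_on_def)
qed

subsection \<open>Frame operators\<close>

lemma omega_Mop_omega:
  assumes g: "g \<in> Clifford n" and C: "C \<in> carrier_mat (2^n) (2^n)"
  shows "omega_dag g (Mop n (omega g C))
       = msum (2^n) (\<lambda>z. (hs (Xi n z g) C / 2^n) \<cdot>\<^sub>m Xi n z g) (bitvecs n)"
proof -
  note gc = CliffordD[OF g]
  have D: "dag g \<in> carrier_mat (2^n) (2^n)"
    using gc(1) by simp
  have Zc: "Zz z \<in> carrier_mat (2^n) (2^n)" if "z \<in> bitvecs n" for z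
    using that Zz_carrier_mat[of z] by (simp add: bitvecs_def)
  let ?c = "\<lambda>z. hs (Zz z) (g * C * dag g) / 2^n"
  have conj_term: "dag g * (?c z \<cdot>\<^sub>m Zz z) * g = (hs (Xi n z g) C / 2^n) \<cdot>\<^sub>m Xi n z g"
    if z: "z \<in> bitvecs n" for z
  proof -
    obtain s b where sb: "s \<in> {1,-1}" "b \<in> pauli_idx n" "Xi n z g = pauli b"
        "dag g * Zz z * g = s \<cdot>\<^sub>m pauli b"
      using Clifford_conj_Zz_Xi[OF g z] .
    have P: "pauli b \<in> carrier_mat (2^n) (2^n)"
      using pauli_idx_carrier_mat[OF sb(2)] .
    have "hs (Zz z) (g * C * dag g) = tr ((dag g * Zz z * g) * C)"
      unfolding hs_def dag_Zz using Zc[OF z] gc(1) C by (rule tr_mult_sandwich)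
    also have "\<dots> = s * hs (pauli b) C"
      unfolding sb(4) hs_def dag_pauli using P C
      by (simp add: mult_smult_assoc_mat[of _ "2^n" "2^n" _ "2^n"] tr_smult[of _ "2^n"])
    finally have "?c z = s * hs (pauli b) C / 2^n"
      by simp
    moreover have "dag g * (?c z \<cdot>\<^sub>m Zz z) * g = ?c z \<cdot>\<^sub>m (s \<cdot>\<^sub>m pauli b)"
      using sandwich_smult[OF D Zc[OF z] gc(1)] sb(4) by simp
    \<comment> \<open>the sign \<open>s\<close> enters twice and cancels\<close>
    ultimately show ?thesis
      using sb(1,3) by (auto simp: smult_smult_mat)
  qed
  have X: "g * C * dag g \<in> carrier_mat (2^n) (2^n)"
    using gc(1) C D by (meson mult_carrier_mat)
  have "omega_dag g (Mop n (omega g C)) = dag g * msum (2^n) (\<lambda>z. ?c z \<cdot>\<^sub>m Zz z) (bitvecs n) * g"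
    unfolding omega_dag_def omega_def Mop_eq_msum_Zz[OF X] ..
  also have "\<dots> = msum (2^n) (\<lambda>z. dag g * (?c z \<cdot>\<^sub>m Zz z) * g) (bitvecs n)"
    using D gc(1) Zc
    by (simp add: mult_msum_distrib[of _ "2^n"] msum_mult_distrib[of _ "2^n"] mult_carrier_mat[of _ "2^n" "2^n"])
  also have "\<dots> = msum (2^n) (\<lambda>z. (hs (Xi n z g) C / 2^n) \<cdot>\<^sub>m Xi n z g) (bitvecs n)"
    using conj_term by (rule msum_cong)
  finally show ?thesis .
qed

lemma sum_regroup_by_Xi:
  fixes F :: "cmat \<Rightarrow> bool list \<Rightarrow> cmat \<Rightarrow> 'a::comm_monoid_add"
  assumes G: "finite G" "G \<subseteq> Clifford n"
  shows "(\<Sum>g\<in>G. \<Sum>z\<in>bitvecs n. F g z (Xi n z g))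
       = (\<Sum>a\<in>pauli_idx n. \<Sum>z\<in>bitvecs n. \<Sum>g\<in>{g\<in>G. Xi n z g = pauli a}. F g z (pauli a))"
proof -
  let ?F = "\<lambda>a z g. if Xi n z g = pauli a then F g z (pauli a) else 0"
  have "(\<Sum>a\<in>pauli_idx n. \<Sum>z\<in>bitvecs n. \<Sum>g\<in>{g\<in>G. Xi n z g = pauli a}. F g z (pauli a))
      = (\<Sum>a\<in>pauli_idx n. \<Sum>z\<in>bitvecs n. \<Sum>g\<in>G. ?F a z g)"
    using G by (simp add: sum.inter_filter)
  also have "\<dots> = (\<Sum>z\<in>bitvecs n. \<Sum>g\<in>G. \<Sum>a\<in>pauli_idx n. ?F a z g)"
    by (simp add: sum.swap[where A = "pauli_idx n"] sum.swap[where B = G])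
  also have "\<dots> = (\<Sum>z\<in>bitvecs n. \<Sum>g\<in>G. F g z (Xi n z g))"
  proof (intro sum.cong refl)
    fix z g assume "z \<in> bitvecs n" "g \<in> G"
    then obtain s b where b: "b \<in> pauli_idx n" "Xi n z g = pauli b"
      using Clifford_conj_Zz_Xi[of g n z] G by blast
    then have "(\<Sum>a\<in>pauli_idx n. ?F a z g) = ?F b z g"
      by (intro sum_eq_single) (auto dest: pauli_idx_inj)
    then show "(\<Sum>a\<in>pauli_idx n. ?F a z g) = F g z (Xi n z g)"
      using b by simp
  qed
  also have "\<dots> = (\<Sum>g\<in>G. \<Sum>z\<in>bitvecs n. F g z (Xi n z g))"
    by (rule sum.swap)
  finally show ?thesis by simp
qed

definition xi_fibre :: "nat \<Rightarrow> cmat set \<Rightarrow> (bool \<times> bool) list \<Rightarrow> (bool list \<times> cmat) set" where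
  "xi_fibre n G a = Sigma (bitvecs n) (\<lambda>z. {g\<in>G. Xi n z g = pauli a})"

lemma finite_xi_fibre: "finite G \<Longrightarrow> finite (xi_fibre n G a)"
  by (simp add: xi_fibre_def)

lemma xi_fibre_snd_in: "x \<in> xi_fibre n G a \<Longrightarrow> snd x \<in> G"
  by (auto simp: xi_fibre_def)

lemma sum_xi_fibre:
  "finite G \<Longrightarrow> (\<Sum>x\<in>xi_fibre n G a. f x) = (\<Sum>z\<in>bitvecs n. \<Sum>g\<in>{g\<in>G. Xi n z g = pauli a}. f (z,g))"
  by (simp add: xi_fibre_def sum.Sigma)

lemma msum_xi_fibre:
  "finite G \<Longrightarrow> msum d f (xi_fibre n G a)
     = msum d (\<lambda>z. msum d (\<lambda>g. f (z,g)) {g\<in>G. Xi n z g = pauli a}) (bitvecs n)"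
  by (simp add: xi_fibre_def msum_Sigma)

lemma s_coef_eq_sum_xi_fibre: "finite G \<Longrightarrow> s_coef n G p a = (\<Sum>x\<in>xi_fibre n G a. p (snd x))"
  by (simp add: s_coef_def sum_xi_fibre)

lemma frame_sum_decomp:
  assumes G: "finite G" "G \<subseteq> Clifford n"
    and C: "\<And>g. g \<in> G \<Longrightarrow> C g \<in> carrier_mat (dim n) (dim n)"
  shows "msum (dim n) (\<lambda>g. complex_of_real (p g) \<cdot>\<^sub>m omega_dag g (Mop n (omega g (C g)))) G
       = msum (dim n) (\<lambda>a. (1 / of_nat (dim n)) \<cdot>\<^sub>m ketbra (pauli a) (pauli a)
           (msum (dim n) (\<lambda>x. complex_of_real (p (snd x)) \<cdot>\<^sub>m C (snd x)) (xi_fibre n G a))) (pauli_idx n)"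
    (is "?L = ?R")
proof (rule eq_matI)
  fix i j assume "i < dim_row ?R" "j < dim_col ?R"
  then have ij: "i < 2^n" "j < 2^n" by (simp_all add: dim_def)
  have C': "C g \<in> carrier_mat (2^n) (2^n)" if "g \<in> G" for g
    using C[OF that] by (simp add: dim_def)
  have "(complex_of_real (p g) \<cdot>\<^sub>m omega_dag g (Mop n (omega g (C g)))) $$ (i,j)
      = (\<Sum>z\<in>bitvecs n. complex_of_real (p g) * (hs (Xi n z g) (C g) / 2^n * Xi n z g $$ (i,j)))"
    if g: "g \<in> G" for g
  proof -
    have gC: "g \<in> Clifford n"
      using g G by auto
    have "((hs (Xi n z g) (C g) / 2^n) \<cdot>\<^sub>m Xi n z g) $$ (i,j) = hs (Xi n z g) (C g) / 2^n * Xi n z g $$ (i,j)"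
      if "z \<in> bitvecs n" for z
      using Xi_carrier_mat[OF gC that] ij by simp
    then show ?thesis
      using ij by (simp add: omega_Mop_omega[OF gC C'[OF g]] sum_distrib_left)
  qed
  then have "?L $$ (i,j)
      = (\<Sum>g\<in>G. \<Sum>z\<in>bitvecs n. complex_of_real (p g) * (hs (Xi n z g) (C g) / 2^n * Xi n z g $$ (i,j)))"
    using ij by (simp add: dim_def)
  also have "\<dots> = (\<Sum>a\<in>pauli_idx n. \<Sum>z\<in>bitvecs n. \<Sum>g\<in>{g\<in>G. Xi n z g = pauli a}.
                      complex_of_real (p g) * (hs (pauli a) (C g) / 2^n * pauli a $$ (i,j)))"
    by (rule sum_regroup_by_Xi[OF G])
  also have "\<dots> = ?R $$ (i,j)"
  proof -
    have "hs (pauli a) (msum (2^n) (\<lambda>x. complex_of_real (p (snd x)) \<cdot>\<^sub>m C (snd x)) (xi_fibre n G a))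
        = (\<Sum>z\<in>bitvecs n. \<Sum>g\<in>{g\<in>G. Xi n z g = pauli a}. complex_of_real (p g) * hs (pauli a) (C g))"
      if a: "a \<in> pauli_idx n" for a
      using pauli_idx_carrier_mat[OF a] G(1) C' xi_fibre_snd_in
      by (simp add: hs_msum_right finite_xi_fibre hs_smult_right sum_xi_fibre)
    then show ?thesis
      using ij by (simp add: dim_def ketbra_def pauli_idx_def sum_distrib_left sum_distrib_right
                             sum_divide_distrib mult_ac)
  qed
  finally show "?L $$ (i,j) = ?R $$ (i,j)" .
qed (simp_all add: dim_def)

lemma s_coef_nonneg: "\<forall>g\<in>G. p g \<ge> 0 \<Longrightarrow> s_coef n G p a \<ge> 0"
  unfolding s_coef_def by (intro sum_nonneg) auto

lemma s_coef_le_1: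
  assumes G: "finite G" "G \<subseteq> Clifford n" and p: "\<forall>g\<in>G. p g \<ge> 0" "(\<Sum>g\<in>G. p g) = 1"
  shows "s_coef n G p a \<le> 1"
proof -
  have "s_coef n G p a = (\<Sum>z\<in>bitvecs n. \<Sum>g\<in>G. if Xi n z g = pauli a then p g else 0)"
    unfolding s_coef_def using G by (simp add: sum.inter_filter)
  also have "\<dots> = (\<Sum>g\<in>G. p g * card {z\<in>bitvecs n. Xi n z g = pauli a})"
    by (subst sum.swap) (simp add: sum.inter_filter[symmetric] mult.commute)
  also have "\<dots> \<le> (\<Sum>g\<in>G. p g)"
  proof (rule sum_mono)
    fix g assume g: "g \<in> G"
    have "card {z\<in>bitvecs n. Xi n z g = pauli a} \<le> Suc 0"
      using Xi_inj[of g n] g G by (subst card_le_Suc0_iff_eq) auto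
    then show "p g * card {z\<in>bitvecs n. Xi n z g = pauli a} \<le> p g"
      using p g by (simp add: mult_left_le)
  qed
  finally show ?thesis
    using p by simp
qed

lemma msum_xi_fibre_const:
  assumes "finite G" "C \<in> carrier_mat d d"
  shows "msum d (\<lambda>x. complex_of_real (p (snd x)) \<cdot>\<^sub>m C) (xi_fibre n G a) = complex_of_real (s_coef n G p a) \<cdot>\<^sub>m C"
  using assms by (simp add: msum_smult_const s_coef_eq_sum_xi_fibre)

lemma frame_op_decomp:
  assumes G: "finite G" "G \<subseteq> Clifford n" and C: "C \<in> carrier_mat (dim n) (dim n)"
  shows "frame_op n G p C =
           msum (dim n) (\<lambda>a. complex_of_real (s_coef n G p a / real (dim n)) \<cdot>\<^sub>m
                            ketbra (pauli a) (pauli a) C) (pauli_idx n)"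
proof -
  have "frame_op n G p C = msum (dim n) (\<lambda>a. (1 / of_nat (dim n)) \<cdot>\<^sub>m
          ketbra (pauli a) (pauli a) (complex_of_real (s_coef n G p a) \<cdot>\<^sub>m C)) (pauli_idx n)"
    unfolding frame_op_def using frame_sum_decomp[OF G, of "\<lambda>_. C" p] C G(1)
    by (simp add: msum_xi_fibre_const)
  also have "\<dots> = msum (dim n) (\<lambda>a. complex_of_real (s_coef n G p a / real (dim n)) \<cdot>\<^sub>m
                                     ketbra (pauli a) (pauli a) C) (pauli_idx n)"
    using C by (intro msum_cong) (simp add: ketbra_smult[where d = "2^n"] pauli_idx_carrier_mat dim_def smult_smult_mat)
  finally show ?thesis .
qed

lemma frame_op_pauli:
  assumes G: "finite G" "G \<subseteq> Clifford n" and a: "a \<in> pauli_idx n"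
  shows "frame_op n G p (pauli a) = complex_of_real (s_coef n G p a) \<cdot>\<^sub>m pauli a"
proof -
  have la: "length a = n"
    using a by (simp add: pauli_idx_def)
  have "frame_op n G p (pauli a) = msum (dim n) (\<lambda>b. complex_of_real (s_coef n G p b / real (dim n)) \<cdot>\<^sub>m
                                     ketbra (pauli b) (pauli b) (pauli a)) (pauli_idx n)"
    using frame_op_decomp[OF G] pauli_idx_carrier_mat[OF a] by (simp add: dim_def)
  also have "\<dots> = complex_of_real (s_coef n G p a / real (dim n)) \<cdot>\<^sub>m ketbra (pauli a) (pauli a) (pauli a)"
  proof (rule msum_eq_single[OF finite_pauli_idx a])
    fix b assume "b \<in> pauli_idx n" "b \<noteq> a"
    then show "complex_of_real (s_coef n G p b / real (dim n)) \<cdot>\<^sub>m ketbra (pauli b) (pauli b) (pauli a)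
             = 0\<^sub>m (dim n) (dim n)"
      using la by (intro eq_matI) (auto simp: ketbra_def hs_pauli pauli_idx_def dim_def)
  qed (use pauli_idx_carrier_mat[OF a] in \<open>simp add: ketbra_def dim_def\<close>)
  also have "\<dots> = complex_of_real (s_coef n G p a) \<cdot>\<^sub>m pauli a"
    using la by (simp add: ketbra_def hs_pauli smult_smult_mat dim_def)
  finally show ?thesis .
qed

lemma frame_op_zero:
  assumes "finite G" "G \<subseteq> Clifford n"
  shows "frame_op n G p (0\<^sub>m (dim n) (dim n)) = 0\<^sub>m (dim n) (dim n)"
proof -
  have "hs (pauli b) (0\<^sub>m (2^n) (2^n)) = 0" if "b \<in> pauli_idx n" for b
    using hs_zero_right[OF pauli_idx_carrier_mat[OF that]] .
  then show ?thesis
    using assms by (intro eq_matI) (auto simp: frame_op_decomp ketbra_def dim_def pauli_idx_def)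
qed

lemma s_coef_pos:
  assumes G: "finite G" "G \<subseteq> Clifford n" and p: "\<forall>g\<in>G. p g \<ge> 0"
    and inj: "inj_on (frame_op n G p) (carrier_mat (dim n) (dim n))" and a: "a \<in> pauli_idx n"
  shows "s_coef n G p a > 0"
proof (rule ccontr)
  assume "\<not> s_coef n G p a > 0"
  then have "s_coef n G p a = 0"
    using s_coef_nonneg[OF p, of n a] by linarith
  moreover have Pa: "pauli a \<in> carrier_mat (dim n) (dim n)"
    using pauli_idx_carrier_mat[OF a] by (simp add: dim_def)
  moreover have "0 \<cdot>\<^sub>m pauli a = 0\<^sub>m (dim n) (dim n)"
    using Pa by (intro eq_matI) auto
  ultimately have "frame_op n G p (pauli a) = frame_op n G p (0\<^sub>m (dim n) (dim n))"
    by (simp add: frame_op_pauli[OF G a] frame_op_zero[OF G])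
  then have "pauli a = 0\<^sub>m (dim n) (dim n)"
    using inj Pa by (auto dest: inj_onD)
  then show False
    using pauli_neq_zero[of a] a by (simp add: pauli_idx_def dim_def)
qed

lemma Lbar_carrier_mat[simp]: "Lbar n G p L a C \<in> carrier_mat (dim n) (dim n)"
  by (simp add: Lbar_def)

lemma Lbar_eq_msum_xi_fibre:
  assumes G: "finite G" and L: "\<And>g. g \<in> G \<Longrightarrow> L g C \<in> carrier_mat (dim n) (dim n)"
  shows "Lbar n G p L a C = msum (dim n) (\<lambda>x. complex_of_real (p (snd x) / s_coef n G p a) \<cdot>\<^sub>m
                                             L (snd x) C) (xi_fibre n G a)"
proof -
  have "Lbar n G p L a C = complex_of_real (inverse (s_coef n G p a)) \<cdot>\<^sub>m
          msum (dim n) (\<lambda>x. complex_of_real (p (snd x)) \<cdot>\<^sub>m L (snd x) C) (xi_fibre n G a)"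
    using G by (simp add: Lbar_def msum_xi_fibre)
  also have "\<dots> = msum (dim n) (\<lambda>x. complex_of_real (inverse (s_coef n G p a)) \<cdot>\<^sub>m
                     (complex_of_real (p (snd x)) \<cdot>\<^sub>m L (snd x) C)) (xi_fibre n G a)"
    using L xi_fibre_snd_in by (intro smult_msum) auto
  also have "\<dots> = msum (dim n) (\<lambda>x. complex_of_real (p (snd x) / s_coef n G p a) \<cdot>\<^sub>m
                                      L (snd x) C) (xi_fibre n G a)"
    by (intro msum_cong) (simp add: smult_smult_mat divide_inverse mult.commute)
  finally show ?thesis .
qed

lemma noisy_frame_op_decomp:
  assumes G: "finite G" "G \<subseteq> Clifford n"
    and s: "\<And>a. a \<in> pauli_idx n \<Longrightarrow> s_coef n G p a \<noteq> 0"
    and L: "\<And>g. g \<in> G \<Longrightarrow> L g C \<in> carrier_mat (dim n) (dim n)"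
  shows "noisy_frame_op n G p L C =
           msum (dim n) (\<lambda>a. complex_of_real (s_coef n G p a / real (dim n)) \<cdot>\<^sub>m
                            ketbra (pauli a) (pauli a) (Lbar n G p L a C)) (pauli_idx n)"
proof -
  have fibre: "msum (dim n) (\<lambda>x. complex_of_real (p (snd x)) \<cdot>\<^sub>m L (snd x) C) (xi_fibre n G a)
             = complex_of_real (s_coef n G p a) \<cdot>\<^sub>m Lbar n G p L a C"
    if a: "a \<in> pauli_idx n" for a
    using L xi_fibre_snd_in s[OF a]
    by (simp add: Lbar_eq_msum_xi_fibre[where L = L and C = C, OF G(1) L] smult_msum smult_smult_mat cong: msum_cong)
  have "noisy_frame_op n G p L C = msum (dim n) (\<lambda>a. (1 / of_nat (dim n)) \<cdot>\<^sub>m ketbra (pauli a) (pauli a)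
          (msum (dim n) (\<lambda>x. complex_of_real (p (snd x)) \<cdot>\<^sub>m L (snd x) C) (xi_fibre n G a))) (pauli_idx n)"
    unfolding noisy_frame_op_def by (rule frame_sum_decomp[OF G]) (rule L)
  also have "\<dots> = msum (dim n) (\<lambda>a. (1 / of_nat (dim n)) \<cdot>\<^sub>m
          ketbra (pauli a) (pauli a) (complex_of_real (s_coef n G p a) \<cdot>\<^sub>m Lbar n G p L a C)) (pauli_idx n)"
    using fibre by (intro msum_cong) simp
  also have "\<dots> = msum (dim n) (\<lambda>a. complex_of_real (s_coef n G p a / real (dim n)) \<cdot>\<^sub>m
                                     ketbra (pauli a) (pauli a) (Lbar n G p L a C)) (pauli_idx n)"
    using Lbar_carrier_mat[of n G p L _ C]
    by (intro msum_cong) (simp add: ketbra_smult[where d = "2^n"] pauli_idx_carrier_mat dim_def smult_smult_mat)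
  finally show ?thesis .
qed

subsection \<open>Quantum channels\<close>

lemma quantum_channel_carrier_mat:
  "quantum_channel d L \<Longrightarrow> \<rho> \<in> carrier_mat d d \<Longrightarrow> L \<rho> \<in> carrier_mat d d"
  unfolding quantum_channel_def by auto

lemma quantum_channel_cong:
  assumes "quantum_channel d L" "\<And>\<rho>. \<rho> \<in> carrier_mat d d \<Longrightarrow> L' \<rho> = L \<rho>"
  shows "quantum_channel d L'"
proof -
  obtain Ks where "set Ks \<subseteq> carrier_mat d d" "msum d (\<lambda>k. dag (Ks ! k) * (Ks ! k)) {..<length Ks} = 1\<^sub>m d"
      "\<forall>\<rho>\<in>carrier_mat d d. L \<rho> = msum d (\<lambda>k. (Ks ! k) * \<rho> * dag (Ks ! k)) {..<length Ks}"
    using assms(1) unfolding quantum_channel_def by blast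
  then show ?thesis
    unfolding quantum_channel_def using assms(2) by auto
qed

lemma quantum_channelI:
  fixes K :: "'i \<Rightarrow> cmat"
  assumes I: "finite I" and K: "\<And>i. i \<in> I \<Longrightarrow> K i \<in> carrier_mat d d"
    and trace_preserving: "msum d (\<lambda>i. dag (K i) * K i) I = 1\<^sub>m d"
    and L: "\<And>\<rho>. \<rho> \<in> carrier_mat d d \<Longrightarrow> L \<rho> = msum d (\<lambda>i. K i * \<rho> * dag (K i)) I"
  shows "quantum_channel d L"
proof -
  obtain h where h: "bij_betw h {..<card I} I"
    using ex_bij_betw_nat_finite[OF I] by (auto simp: lessThan_atLeast0)
  define Ks where "Ks = map (\<lambda>k. K (h k)) [0..<card I]"
  have Ks: "msum d (\<lambda>k. F (Ks ! k)) {..<length Ks} = msum d (\<lambda>i. F (K i)) I" for F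
  proof -
    have "msum d (\<lambda>k. F (Ks ! k)) {..<card I} = msum d (\<lambda>k. F (K (h k))) {..<card I}"
      by (rule msum_cong) (simp add: Ks_def)
    also have "\<dots> = msum d (\<lambda>i. F (K i)) I"
      by (rule msum_reindex_bij_betw[OF h])
    finally show ?thesis
      by (simp add: Ks_def)
  qed
  show ?thesis
    unfolding quantum_channel_def
  proof (intro exI[of _ Ks] conjI ballI)
    show "set Ks \<subseteq> carrier_mat d d"
      using K bij_betw_apply[OF h] by (auto simp: Ks_def)
    show "msum d (\<lambda>k. dag (Ks ! k) * Ks ! k) {..<length Ks} = 1\<^sub>m d"
      using Ks[of "\<lambda>X. dag X * X"] trace_preserving by simp
    show "L \<rho> = msum d (\<lambda>k. Ks ! k * \<rho> * dag (Ks ! k)) {..<length Ks}" if "\<rho> \<in> carrier_mat d d" for \<rho>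
      using Ks[of "\<lambda>X. X * \<rho> * dag X"] L[OF that] by simp
  qed
qed

lemma smult_sandwich_dag:
  fixes K \<rho> :: cmat
  assumes K: "K \<in> carrier_mat d d" and \<rho>: "\<rho> \<in> carrier_mat d d"
  shows "(c \<cdot>\<^sub>m K) * \<rho> * dag (c \<cdot>\<^sub>m K) = (c * cnj c) \<cdot>\<^sub>m (K * \<rho> * dag K)"
    and "dag (c \<cdot>\<^sub>m K) * (c \<cdot>\<^sub>m K) = (cnj c * c) \<cdot>\<^sub>m (dag K * K)"
proof -
  have D: "dag K \<in> carrier_mat d d" using K by simp
  have "(c \<cdot>\<^sub>m K) * \<rho> * (cnj c \<cdot>\<^sub>m dag K) = c \<cdot>\<^sub>m (K * \<rho> * (cnj c \<cdot>\<^sub>m dag K))"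
    using K \<rho> D by (simp add: mult_smult_assoc_mat[of _ d d _ d])
  also have "\<dots> = (c * cnj c) \<cdot>\<^sub>m (K * \<rho> * dag K)"
    using K \<rho> D mult_smult_distrib[OF mult_carrier_mat[OF K \<rho>] D] by (simp add: smult_smult_mat)
  finally show "(c \<cdot>\<^sub>m K) * \<rho> * dag (c \<cdot>\<^sub>m K) = (c * cnj c) \<cdot>\<^sub>m (K * \<rho> * dag K)"
    by (simp add: dag_smult)
  show "dag (c \<cdot>\<^sub>m K) * (c \<cdot>\<^sub>m K) = (cnj c * c) \<cdot>\<^sub>m (dag K * K)"
    using K D by (simp add: dag_smult mult_smult_assoc_mat[OF D smult_carrier_mat[OF K]] mult_smult_distrib[OF D K]
                           smult_smult_mat)
qed

text \<open>Kraus operators of a convex combination: \<open>\<surd>w\<^sub>i K\<^sub>i\<^sub>k\<close> for all \<open>i\<close> and \<open>k\<close>.\<close>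

lemma quantum_channel_convex_comb:
  fixes L :: "'i \<Rightarrow> superop" and w :: "'i \<Rightarrow> real"
  assumes I: "finite I" and w: "\<And>i. i \<in> I \<Longrightarrow> w i \<ge> 0" and w1: "(\<Sum>i\<in>I. w i) = 1"
    and L: "\<And>i. i \<in> I \<Longrightarrow> quantum_channel d (L i)"
  shows "quantum_channel d (\<lambda>\<rho>. msum d (\<lambda>i. complex_of_real (w i) \<cdot>\<^sub>m L i \<rho>) I)"
proof -
  have "\<forall>i\<in>I. \<exists>Ks. set Ks \<subseteq> carrier_mat d d
      \<and> msum d (\<lambda>k. dag (Ks ! k) * (Ks ! k)) {..<length Ks} = 1\<^sub>m d
      \<and> (\<forall>\<rho>\<in>carrier_mat d d. L i \<rho> = msum d (\<lambda>k. (Ks ! k) * \<rho> * dag (Ks ! k)) {..<length Ks})"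
    using L unfolding quantum_channel_def by blast
  from bchoice[OF this] obtain Ks where Ks: "\<forall>i\<in>I. set (Ks i) \<subseteq> carrier_mat d d
      \<and> msum d (\<lambda>k. dag (Ks i ! k) * (Ks i ! k)) {..<length (Ks i)} = 1\<^sub>m d
      \<and> (\<forall>\<rho>\<in>carrier_mat d d. L i \<rho> = msum d (\<lambda>k. (Ks i ! k) * \<rho> * dag (Ks i ! k)) {..<length (Ks i)})"
    by blast
  define J where "J = Sigma I (\<lambda>i. {..<length (Ks i)})"
  define K where "K = (\<lambda>(i,k). complex_of_real (sqrt (w i)) \<cdot>\<^sub>m (Ks i ! k))"
  have Kc: "Ks i ! k \<in> carrier_mat d d" if "i \<in> I" "k < length (Ks i)" for i k
    using Ks that nth_mem by blast
  have sqrt_w: "complex_of_real (sqrt (w i)) * cnj (complex_of_real (sqrt (w i))) = complex_of_real (w i)"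
    if "i \<in> I" for i
    using w[OF that] by (simp flip: of_real_mult)
  show ?thesis
  proof (rule quantum_channelI)
    show "finite J"
      using I by (simp add: J_def)
    show "K x \<in> carrier_mat d d" if "x \<in> J" for x
      using that Kc by (auto simp: K_def J_def)
    have "msum d (\<lambda>x. dag (K x) * K x) J
        = msum d (\<lambda>(i,k). complex_of_real (w i) \<cdot>\<^sub>m (dag (Ks i ! k) * (Ks i ! k))) J"
      using smult_sandwich_dag(2)[OF Kc Kc] sqrt_w by (intro msum_cong) (auto simp: J_def K_def mult.commute)
    also have "\<dots> = msum d (\<lambda>i. complex_of_real (w i) \<cdot>\<^sub>m
                      msum d (\<lambda>k. dag (Ks i ! k) * (Ks i ! k)) {..<length (Ks i)}) I"
      unfolding J_def using I Kc by (intro msum_Sigma_smult) (auto intro!: mult_carrier_mat[of _ d d])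
    also have "\<dots> = msum d (\<lambda>i. complex_of_real (w i) \<cdot>\<^sub>m 1\<^sub>m d) I"
      using Ks by (intro msum_cong) simp
    also have "\<dots> = 1\<^sub>m d"
      by (simp add: msum_smult_const w1 one_smult_mat flip: of_real_sum)
    finally show "msum d (\<lambda>x. dag (K x) * K x) J = 1\<^sub>m d" .
    fix \<rho> :: cmat assume \<rho>: "\<rho> \<in> carrier_mat d d"
    have "msum d (\<lambda>x. K x * \<rho> * dag (K x)) J
        = msum d (\<lambda>(i,k). complex_of_real (w i) \<cdot>\<^sub>m ((Ks i ! k) * \<rho> * dag (Ks i ! k))) J"
      using smult_sandwich_dag(1)[OF Kc \<rho>] sqrt_w by (intro msum_cong) (auto simp: J_def K_def)
    also have "\<dots> = msum d (\<lambda>i. complex_of_real (w i) \<cdot>\<^sub>m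
                      msum d (\<lambda>k. (Ks i ! k) * \<rho> * dag (Ks i ! k)) {..<length (Ks i)}) I"
      unfolding J_def using I Kc \<rho> by (intro msum_Sigma_smult) (auto intro!: mult_carrier_mat[of _ d d])
    also have "\<dots> = msum d (\<lambda>i. complex_of_real (w i) \<cdot>\<^sub>m L i \<rho>) I"
      using Ks \<rho> by (intro msum_cong) simp
    finally show "msum d (\<lambda>i. complex_of_real (w i) \<cdot>\<^sub>m L i \<rho>) I = msum d (\<lambda>x. K x * \<rho> * dag (K x)) J"
      by simp
  qed
qed

lemma sum_xi_fibre_weights:
  "finite G \<Longrightarrow> s_coef n G p a \<noteq> 0 \<Longrightarrow> (\<Sum>x\<in>xi_fibre n G a. p (snd x) / s_coef n G p a) = 1"
  by (simp add: s_coef_eq_sum_xi_fibre flip: sum_divide_distrib)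

lemma Lbar_channel:
  assumes G: "finite G" and p: "\<forall>g\<in>G. p g \<ge> 0" and s: "s_coef n G p a > 0"
    and L: "\<forall>g\<in>G. quantum_channel (dim n) (L g)"
  shows "quantum_channel (dim n) (Lbar n G p L a)"
proof (rule quantum_channel_cong)
  show "quantum_channel (dim n) (\<lambda>\<rho>. msum (dim n) (\<lambda>x. complex_of_real (p (snd x) / s_coef n G p a) \<cdot>\<^sub>m
                                                     L (snd x) \<rho>) (xi_fibre n G a))"
    using G p s L xi_fibre_snd_in
    by (intro quantum_channel_convex_comb) (auto simp: finite_xi_fibre sum_xi_fibre_weights)
  show "Lbar n G p L a \<rho> = msum (dim n) (\<lambda>x. complex_of_real (p (snd x) / s_coef n G p a) \<cdot>\<^sub>m
                                            L (snd x) \<rho>) (xi_fibre n G a)"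
    if "\<rho> \<in> carrier_mat (dim n) (dim n)" for \<rho>
    using G L that by (intro Lbar_eq_msum_xi_fibre) (auto intro: quantum_channel_carrier_mat)
qed

subsection \<open>Pauli channels\<close>

lemma abs_convex_comb_le_1:
  fixes w r :: "'i \<Rightarrow> real"
  assumes "\<And>i. i \<in> I \<Longrightarrow> w i \<ge> 0" "(\<Sum>i\<in>I. w i) = 1" "\<And>i. i \<in> I \<Longrightarrow> \<bar>r i\<bar> \<le> 1"
  shows "\<bar>\<Sum>i\<in>I. w i * r i\<bar> \<le> 1"
proof -
  have "\<bar>\<Sum>i\<in>I. w i * r i\<bar> \<le> (\<Sum>i\<in>I. \<bar>w i * r i\<bar>)"
    by (rule sum_abs)
  also have "\<dots> \<le> (\<Sum>i\<in>I. w i)"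
    using assms(1,3) by (intro sum_mono) (simp add: abs_mult mult_left_le)
  finally show ?thesis
    using assms(2) by simp
qed

lemma pauli_channel_eigen:
  assumes ch: "pauli_channel n \<Lambda>" and a: "a \<in> pauli_idx n"
  obtains r :: real where "\<bar>r\<bar> \<le> 1" "\<Lambda> (pauli a) = complex_of_real r \<cdot>\<^sub>m pauli a"
    "pauli_eig \<Lambda> a = complex_of_real r"
proof -
  obtain q where q0: "\<forall>b\<in>pauli_idx n. q b \<ge> 0" and q1: "(\<Sum>b\<in>pauli_idx n. q b) = 1"
    and q\<Lambda>: "\<forall>\<rho>\<in>carrier_mat (dim n) (dim n).
          \<Lambda> \<rho> = msum (dim n) (\<lambda>b. complex_of_real (q b) \<cdot>\<^sub>m (pauli b * \<rho> * pauli b)) (pauli_idx n)"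
    using ch unfolding pauli_channel_def by blast
  define r where "r = (\<Sum>b\<in>pauli_idx n. q b * pauli_sign a b)"
  have la: "length a = n"
    using a by (simp add: pauli_idx_def)
  have Pa: "pauli a \<in> carrier_mat (dim n) (dim n)"
    using pauli_idx_carrier_mat[OF a] by (simp add: dim_def)
  have "\<Lambda> (pauli a) = msum (dim n) (\<lambda>b. complex_of_real (q b) \<cdot>\<^sub>m (pauli b * pauli a * pauli b)) (pauli_idx n)"
    using q\<Lambda> Pa by simp
  also have "\<dots> = msum (dim n) (\<lambda>b. complex_of_real (q b * pauli_sign a b) \<cdot>\<^sub>m pauli a) (pauli_idx n)"
    using la by (intro msum_cong) (simp add: pauli_conj_pauli pauli_idx_def smult_smult_mat)
  also have "\<dots> = complex_of_real r \<cdot>\<^sub>m pauli a"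
    using Pa by (simp add: msum_smult_const r_def)
  finally have eig: "\<Lambda> (pauli a) = complex_of_real r \<cdot>\<^sub>m pauli a" .
  have "\<bar>r\<bar> \<le> 1"
    unfolding r_def using q0 q1 abs_pauli_sign by (intro abs_convex_comb_le_1) auto
  moreover have "pauli_eig \<Lambda> a = complex_of_real r"
    unfolding pauli_eig_def
  proof (rule the_equality)
    fix c assume "\<Lambda> (pauli a) = c \<cdot>\<^sub>m pauli a"
    then have "c \<cdot>\<^sub>m pauli a = complex_of_real r \<cdot>\<^sub>m pauli a"
      using eig by simp
    then show "c = complex_of_real r"
      using smult_pauli_eqD[OF refl] by simp
  qed (rule eig)
  ultimately show ?thesis
    by (rule that[OF _ eig])
qed

lemma Lbar_pauli_eigen:
  assumes G: "finite G" and p: "\<forall>g\<in>G. p g \<ge> 0" and s: "s_coef n G p a > 0" and a: "a \<in> pauli_idx n"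
    and L: "\<forall>g\<in>G. pauli_channel n (L g)"
  shows "Lbar n G p L a (pauli a) = lbar n G p L a \<cdot>\<^sub>m pauli a
           \<and> lbar n G p L a \<in> \<real> \<and> -1 \<le> Re (lbar n G p L a) \<and> Re (lbar n G p L a) \<le> 1"
proof -
  obtain r where r: "\<And>g. g \<in> G \<Longrightarrow> \<bar>r g\<bar> \<le> 1 \<and> L g (pauli a) = complex_of_real (r g) \<cdot>\<^sub>m pauli a
                                    \<and> pauli_eig (L g) a = complex_of_real (r g)"
  proof -
    have "\<forall>g\<in>G. \<exists>r. \<bar>r\<bar> \<le> 1 \<and> L g (pauli a) = complex_of_real r \<cdot>\<^sub>m pauli a
                        \<and> pauli_eig (L g) a = complex_of_real r"
      using pauli_channel_eigen[OF _ a] L by blast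
    then show ?thesis
      using that by (metis bchoice)
  qed
  define w where "w x = p (snd x) / s_coef n G p a" for x :: "bool list \<times> cmat"
  define R where "R = (\<Sum>x\<in>xi_fibre n G a. w x * r (snd x))"
  have Pa: "pauli a \<in> carrier_mat (dim n) (dim n)"
    using pauli_idx_carrier_mat[OF a] by (simp add: dim_def)
  have "Lbar n G p L a (pauli a) = msum (dim n) (\<lambda>x. complex_of_real (w x) \<cdot>\<^sub>m L (snd x) (pauli a)) (xi_fibre n G a)"
    unfolding w_def using G r Pa by (intro Lbar_eq_msum_xi_fibre) auto
  also have "\<dots> = msum (dim n) (\<lambda>x. complex_of_real (w x * r (snd x)) \<cdot>\<^sub>m pauli a) (xi_fibre n G a)"
    using r xi_fibre_snd_in by (intro msum_cong) (simp add: smult_smult_mat)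
  also have "\<dots> = complex_of_real R \<cdot>\<^sub>m pauli a"
    using Pa by (simp add: msum_smult_const R_def)
  finally have Lb: "Lbar n G p L a (pauli a) = complex_of_real R \<cdot>\<^sub>m pauli a" .
  have lb: "lbar n G p L a = complex_of_real R"
    unfolding lbar_def R_def w_def using G r
    by (simp add: sum_xi_fibre sum_distrib_left divide_inverse mult_ac)
  have "\<bar>R\<bar> \<le> 1"
    unfolding R_def w_def using G p s r xi_fibre_snd_in
    by (intro abs_convex_comb_le_1) (auto simp: sum_xi_fibre_weights)
  then show ?thesis
    using Lb lb by (simp add: abs_le_iff)
qed

theorem lemma1:
  fixes n :: nat and G :: "complex mat set" and p :: "complex mat \<Rightarrow> real"
    and L :: "complex mat \<Rightarrow> complex mat \<Rightarrow> complex mat"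
  assumes G_fin: "finite G" and G_cl: "G \<subseteq> Clifford n"
    and p_nonneg: "\<forall>g\<in>G. p g \<ge> 0" and p_sum: "(\<Sum>g\<in>G. p g) = 1"
    and S_inv: "bij_betw (frame_op n G p) (carrier_mat (dim n) (dim n)) (carrier_mat (dim n) (dim n))"
    and L_chan: "\<forall>g\<in>G. quantum_channel (dim n) (L g)"
  shows "(\<forall>C\<in>carrier_mat (dim n) (dim n).
            frame_op n G p C =
              msum (dim n) (\<lambda>a. complex_of_real (s_coef n G p a / real (dim n)) \<cdot>\<^sub>m
                               ketbra (pauli a) (pauli a) C) (pauli_idx n))
       \<and> (\<forall>a\<in>pauli_idx n. 0 < s_coef n G p a \<and> s_coef n G p a \<le> 1)
       \<and> (\<forall>a\<in>pauli_idx n. quantum_channel (dim n) (Lbar n G p L a))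
       \<and> (\<forall>C\<in>carrier_mat (dim n) (dim n).
            noisy_frame_op n G p L C =
              msum (dim n) (\<lambda>a. complex_of_real (s_coef n G p a / real (dim n)) \<cdot>\<^sub>m
                               ketbra (pauli a) (pauli a) (Lbar n G p L a C)) (pauli_idx n))
       \<and> ((\<forall>g\<in>G. pauli_channel n (L g)) \<longrightarrow>
            (\<forall>a\<in>pauli_idx n. Lbar n G p L a (pauli a) = lbar n G p L a \<cdot>\<^sub>m pauli a
                \<and> lbar n G p L a \<in> \<real> \<and> -1 \<le> Re (lbar n G p L a) \<and> Re (lbar n G p L a) \<le> 1))"
proof -
  have s_pos: "s_coef n G p a > 0" if "a \<in> pauli_idx n" for a
    using s_coef_pos[OF G_fin G_cl p_nonneg bij_betw_imp_inj_on[OF S_inv] that] .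
  have L_carrier: "L g C \<in> carrier_mat (dim n) (dim n)" if "g \<in> G" "C \<in> carrier_mat (dim n) (dim n)" for g C
    using L_chan that quantum_channel_carrier_mat by blast
  show ?thesis
    using frame_op_decomp[OF G_fin G_cl] s_pos s_coef_le_1[OF G_fin G_cl p_nonneg p_sum]
      Lbar_channel[OF G_fin p_nonneg s_pos L_chan]
      noisy_frame_op_decomp[OF G_fin G_cl, where p = p and L = L] L_carrier
      Lbar_pauli_eigen[OF G_fin p_nonneg s_pos]
    by (simp add: less_imp_neq[symmetric])
qed

end
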